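(* Let $N\ge 2$, $t\ge 1$, $r\ge 1$ be integers with $m=t+r\le N$, and let $K\ge N$. Consider the action of the group $\mathcal{L}$ (defined in the context) on pairs $(\mathbf{z},\mathbf{S})$, with $\mathbf{z}\in\mathbb{C}^{N}$ and $\mathbf{S}\in\mathbb{C}^{N\times N}$ Hermitian positive definite, given by $l(\mathbf{z},\mathbf{S})=(\mathbf{G}\mathbf{z}+\mathbf{f},\mathbf{G}\mathbf{S}\mathbf{G}^\dagger)$ for $(\mathbf{G},\mathbf{f})\in\mathcal{L}$. Then a maximal invariant statistic with respect to $\mathcal{L}$ is $$\mathbf{t}_1(\mathbf{z},\mathbf{S})=\begin{cases}\begin{bmatrix}\mathbf{z}_{2.3}^\dagger\mathbf{S}_{2.3}^{-1}\mathbf{z}_{2.3}\\ \mathbf{z}_3^\dagger\mathbf{S}_{33}^{-1}\mathbf{z}_3\end{bmatrix}, & m<N,\\[2mm] \mathbf{z}_2^\dagger\mathbf{S}_{22}^{-1}\mathbf{z}_2, & m=N,\end{cases}$$ where $\mathbf{z}_{2.3}=\mathbf{z}_2-\mathbf{S}_{23}\mathbf{S}_{33}^{-1}\mathbf{z}_3$ and $\mathbf{S}_{2.3}=\mathbf{S}_{22}-\mathbf{S}_{23}\mathbf{S}_{33}^{-1}\mathbf{S}_{32}$.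
   Context: Partition $\mathbf{z}=[\mathbf{z}_1^T\ \mathbf{z}_2^T\ \mathbf{z}_3^T]^T$ with $\mathbf{z}_1\in\mathbb{C}^{t}$, $\mathbf{z}_2\in\mathbb{C}^{r}$, $\mathbf{z}_3\in\mathbb{C}^{N-m}$, and partition $\mathbf{S}$ conformably into blocks $\mathbf{S}_{ij}$, $i,j\in\{1,2,3\}$, of sizes given by replacing $1,2,3$ with $t,r,N-m$. When $m=N$ the "3"-blocks are absent. (In the application, $\mathbf{S}=\sum_{k=1}^K\mathbf{z}_k\mathbf{z}_k^\dagger$ is the sample matrix of $K$ secondary data vectors.) The set $\mathcal{G}$ consists of all nonsingular $N\times N$ block upper-triangular matrices $\mathbf{G}=\begin{bmatrix}\mathbf{G}_{11}&\mathbf{G}_{12}&\mathbf{G}_{13}\\ \mathbf{0}&\mathbf{G}_{22}&\mathbf{G}_{23}\\ \mathbf{0}&\mathbf{0}&\mathbf{G}_{33}\end{bmatrix}$ with $\mathbf{G}_{11}\in GL(t)$, $\mathbf{G}_{22}\in GL(r)$, $\mathbf{G}_{33}\in GL(N-m)$ (block sizes conforming to the partition above; the third block row/column absent if $m=N$). The set $\mathcal{F}$ consists of all $\mathbf{f}=[\mathbf{f}_{11}^T\ \mathbf{0}^T]^T\in\mathbb{C}^N$ with $\mathbf{f}_{11}\in\mathbb{C}^{t}$. The group $\mathcal{L}$ is $\mathcal{G}\times\mathcal{F}$ with operation $(\mathbf{G}_1,\mathbf{f}_1)\circ(\mathbf{G}_2,\mathbf{f}_2)=(\mathbf{G}_2\mathbf{G}_1,\mathbf{G}_2\mathbf{f}_1+\mathbf{f}_2)$.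 A statistic $\mathbf{t}$ is maximal invariant with respect to $\mathcal{L}$ if (i) $\mathbf{t}(\mathbf{z},\mathbf{S})=\mathbf{t}(l(\mathbf{z},\mathbf{S}))$ for all $l\in\mathcal{L}$, and (ii) $\mathbf{t}(\mathbf{z},\mathbf{S})=\mathbf{t}(\bar{\mathbf{z}},\bar{\mathbf{S}})$ implies there exists $l\in\mathcal{L}$ with $(\mathbf{z},\mathbf{S})=l(\bar{\mathbf{z}},\bar{\mathbf{S}})$. *)

theory Defs
  imports "Jordan_Normal_Form.Matrix"
begin

definition ctrans :: "complex mat \<Rightarrow> complex mat" where
  "ctrans A = mat (dim_col A) (dim_row A) (\<lambda>(i,j). cnj (A $$ (j,i)))"

definition minv :: "complex mat \<Rightarrow> complex mat" where
  "minv A = (SOME B. B \<in> carrier_mat (dim_row A) (dim_row A) \<and>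
                     A * B = 1\<^sub>m (dim_row A) \<and> B * A = 1\<^sub>m (dim_row A))"

definition qform :: "complex vec \<Rightarrow> complex mat \<Rightarrow> complex vec \<Rightarrow> complex" where
  "qform x A y = (\<Sum>i<dim_vec x. cnj (x $ i) * (A *\<^sub>v y) $ i)"

definition hpd :: "nat \<Rightarrow> complex mat \<Rightarrow> bool" where
  "hpd N S \<longleftrightarrow> S \<in> carrier_mat N N \<and> ctrans S = S \<and>
     (\<forall>x \<in> carrier_vec N. x \<noteq> 0\<^sub>v N \<longrightarrow> Re (qform x S x) > 0)"

definition subm :: "complex mat \<Rightarrow> nat \<Rightarrow> nat \<Rightarrow> nat \<Rightarrow> nat \<Rightarrow> complex mat" where
  "subm S a b c d = mat (b - a) (d - c) (\<lambda>(i,j). S $$ (a + i, c + j))"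

definition subv :: "complex vec \<Rightarrow> nat \<Rightarrow> nat \<Rightarrow> complex vec" where
  "subv z a b = vec (b - a) (\<lambda>i. z $ (a + i))"

text \<open>Block index (0,1,2 for blocks 1,2,3) of coordinate i under the partition t, r, N-m.\<close>
definition blk :: "nat \<Rightarrow> nat \<Rightarrow> nat \<Rightarrow> nat" where
  "blk t m i = (if i < t then 0 else if i < m then 1 else 2)"

text \<open>The set \<G>: nonsingular block upper-triangular matrices with nonsingular diagonal blocks.\<close>
definition Gset :: "nat \<Rightarrow> nat \<Rightarrow> nat \<Rightarrow> complex mat set" where
  "Gset N t r = {G. G \<in> carrier_mat N N \<and> invertible_mat G \<and>
     (\<forall>i<N. \<forall>j<N. blk t (t + r) j < blk t (t + r) i \<longrightarrow> G $$ (i,j) = 0) \<and>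
     invertible_mat (subm G 0 t 0 t) \<and>
     invertible_mat (subm G t (t + r) t (t + r)) \<and>
     (t + r < N \<longrightarrow> invertible_mat (subm G (t + r) N (t + r) N))}"

definition Fset :: "nat \<Rightarrow> nat \<Rightarrow> complex vec set" where
  "Fset N t = {f. f \<in> carrier_vec N \<and> (\<forall>i. t \<le> i \<and> i < N \<longrightarrow> f $ i = 0)}"

definition Lset :: "nat \<Rightarrow> nat \<Rightarrow> nat \<Rightarrow> (complex mat \<times> complex vec) set" where
  "Lset N t r = Gset N t r \<times> Fset N t"

definition act :: "complex mat \<times> complex vec \<Rightarrow> complex vec \<times> complex mat \<Rightarrow> complex vec \<times> complex mat" where
  "act l zS = (case l of (G, f) \<Rightarrow> case zS of (z, S) \<Rightarrow> (G *\<^sub>v z + f, G * S * ctrans G))"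

definition Dset :: "nat \<Rightarrow> (complex vec \<times> complex mat) set" where
  "Dset N = {(z, S). z \<in> carrier_vec N \<and> hpd N S}"

definition maximal_invariant ::
  "('x \<Rightarrow> 'y) \<Rightarrow> 'x set \<Rightarrow> 'g set \<Rightarrow> ('g \<Rightarrow> 'x \<Rightarrow> 'x) \<Rightarrow> bool" where
  "maximal_invariant T X Grp ac \<longleftrightarrow>
     (\<forall>x\<in>X. \<forall>g\<in>Grp. T (ac g x) = T x) \<and>
     (\<forall>x\<in>X. \<forall>y\<in>X. T x = T y \<longrightarrow> (\<exists>g\<in>Grp. x = ac g y))"

definition t1 :: "nat \<Rightarrow> nat \<Rightarrow> nat \<Rightarrow> complex vec \<times> complex mat \<Rightarrow> complex list" where
  "t1 N t r zS = (case zS of (z, S) \<Rightarrow>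
     let m = t + r;
         z2 = subv z t m; z3 = subv z m N;
         S22 = subm S t m t m; S23 = subm S t m m N;
         S32 = subm S m N t m; S33 = subm S m N m N;
         z23 = z2 - S23 *\<^sub>v (minv S33 *\<^sub>v z3);
         S23' = S22 - S23 * minv S33 * S32
     in if m < N then [qform z23 (minv S23') z23, qform z3 (minv S33) z3]
        else [qform z2 (minv S22) z2])"

end

(*
  Write tau_k(z, S) = z_k^H (S_kk)^-1 z_k for the trailing block of indices k, ..., N-1 (tail_form).
  The Schur complement formula for the inverse of a partitioned matrix shows that t_1 consists of
  tau_t - tau_m and tau_m, where m = t + r. An element (G, f) of L acts on the trailing block from
  k in {t, m} on by the congruence (z_k, S_kk) |-> (G_kk z_k, G_kk S_kk G_kk^H), because G is block
  upper triangular and f vanishes there; so tau_t and tau_m are invariant. Conversely, an upper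
  triangular Cholesky factor of S lies in G and moves (z, S) to some (w, I), where t_1 only records
  the squared norms of the second and third blocks of w. Equal norms are matched by unitary maps
  (a phase rotation followed by a Householder reflection) acting block-diagonally, which fix I, and
  the first block is absorbed by the translation f.
*)

theory Submission
  imports Defs "Jordan_Normal_Form.Determinant"
begin

lemma ctrans_carrier_mat [simp]: "A \<in> carrier_mat n m \<Longrightarrow> ctrans A \<in> carrier_mat m n"
  unfolding ctrans_def carrier_mat_def by auto

lemma dim_ctrans [simp]: "dim_row (ctrans A) = dim_col A" "dim_col (ctrans A) = dim_row A"
  unfolding ctrans_def by auto

lemma index_ctrans [simp]:
  "i < dim_col A \<Longrightarrow> j < dim_row A \<Longrightarrow> ctrans A $$ (i, j) = cnj (A $$ (j, i))"
  unfolding ctrans_def by auto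

lemma ctrans_ctrans [simp]: "ctrans (ctrans A) = A"
  by (rule eq_matI) auto

lemma ctrans_one [simp]: "ctrans (1\<^sub>m n) = 1\<^sub>m n"
  by (rule eq_matI) auto

lemma ctrans_zero [simp]: "ctrans (0\<^sub>m n m) = 0\<^sub>m m n"
  by (rule eq_matI) auto

lemma ctrans_uminus: "ctrans (- A) = - ctrans A"
  by (rule eq_matI) auto

lemma ctrans_mult: "dim_col A = dim_row B \<Longrightarrow> ctrans (A * B) = ctrans B * ctrans A"
  by (rule eq_matI) (auto simp: scalar_prod_def mult.commute intro!: sum.cong)

lemma ctrans_four_block_mat:
  assumes "A \<in> carrier_mat n1 m1" "B \<in> carrier_mat n1 m2" "C \<in> carrier_mat n2 m1" "D \<in> carrier_mat n2 m2"
  shows "ctrans (four_block_mat A B C D) = four_block_mat (ctrans A) (ctrans C) (ctrans B) (ctrans D)"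
  using assms by (intro eq_matI) auto

lemma ctrans_inverse:
  assumes "A \<in> carrier_mat n n" "B \<in> carrier_mat n n" "A * B = 1\<^sub>m n"
  shows "ctrans B * ctrans A = 1\<^sub>m n"
  using ctrans_mult[of A B] assms by auto

lemma det_nonzero_of_right_inverse:
  fixes A B :: "complex mat"
  assumes "A \<in> carrier_mat n n" "B \<in> carrier_mat n n" "A * B = 1\<^sub>m n"
  shows "det A \<noteq> 0"
  using det_mult[OF assms(1,2)] assms(3) by auto

lemma invertible_mat_iff_det:
  fixes A :: "complex mat"
  assumes A: "A \<in> carrier_mat n n"
  shows "invertible_mat A \<longleftrightarrow> det A \<noteq> 0"
proof
  assume "invertible_mat A"
  then obtain B where AB: "A * B = 1\<^sub>m n" "B * A = 1\<^sub>m (dim_row B)"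
    unfolding invertible_mat_def inverts_mat_def using A by auto
  have "B \<in> carrier_mat n n"
    using arg_cong[OF AB(1), of dim_col] arg_cong[OF AB(2), of dim_col] A by auto
  then show "det A \<noteq> 0"
    using det_nonzero_of_right_inverse[OF A _ AB(1)] by blast
next
  assume "det A \<noteq> 0"
  from det_non_zero_imp_unit[OF A this, of "()"] obtain B
    where "B \<in> carrier_mat n n" "B * A = 1\<^sub>m n" "A * B = 1\<^sub>m n"
    unfolding Units_def ring_mat_simps by auto
  then show "invertible_mat A"
    using A unfolding invertible_mat_def inverts_mat_def by auto
qed

lemma obtain_inverse_mat:
  fixes A :: "complex mat"
  assumes A: "A \<in> carrier_mat n n" and "det A \<noteq> 0"
  obtains B where "B \<in> carrier_mat n n" "A * B = 1\<^sub>m n" "B * A = 1\<^sub>m n"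
proof -
  from det_non_zero_imp_unit[OF assms, of "()"] obtain B
    where "B \<in> carrier_mat n n" "B * A = 1\<^sub>m n" "A * B = 1\<^sub>m n"
    unfolding Units_def ring_mat_simps by auto
  then show thesis using that by auto
qed

lemma minv_eq:
  fixes A B :: "complex mat"
  assumes A: "A \<in> carrier_mat n n" and B: "B \<in> carrier_mat n n" and AB: "A * B = 1\<^sub>m n"
  shows "minv A = B"
proof -
  have BA: "B * A = 1\<^sub>m n"
    by (rule mat_mult_left_right_inverse[OF A B AB])
  let ?P = "\<lambda>B'. B' \<in> carrier_mat n n \<and> A * B' = 1\<^sub>m n \<and> B' * A = 1\<^sub>m n"
  have "?P B" using B AB BA by auto
  then have P: "?P (minv A)"
    unfolding minv_def carrier_matD(1)[OF A] by (rule someI)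
  then have P1: "minv A \<in> carrier_mat n n" and P2: "minv A * A = 1\<^sub>m n" by auto
  have "minv A = minv A * (A * B)" using P1 AB by simp
  also have "\<dots> = (minv A * A) * B" using P1 A B by simp
  also have "\<dots> = B" using P2 B by simp
  finally show ?thesis .
qed

lemma minv_inverse:
  fixes A :: "complex mat"
  assumes A: "A \<in> carrier_mat n n" and "det A \<noteq> 0"
  shows "minv A \<in> carrier_mat n n" "A * minv A = 1\<^sub>m n" "minv A * A = 1\<^sub>m n"
proof -
  obtain B where B: "B \<in> carrier_mat n n" "A * B = 1\<^sub>m n" "B * A = 1\<^sub>m n"
    using obtain_inverse_mat[OF assms] by metis
  moreover have "minv A = B" by (rule minv_eq[OF A B(1,2)])
  ultimately show "minv A \<in> carrier_mat n n" "A * minv A = 1\<^sub>m n" "minv A * A = 1\<^sub>m n" by auto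
qed

lemma minv_one [simp]: "minv (1\<^sub>m n) = 1\<^sub>m n"
  by (rule minv_eq) auto

lemma mult_right_inverse_cancel:
  fixes A B X :: "complex mat"
  assumes "A \<in> carrier_mat n m" "B \<in> carrier_mat m n" "A * B = 1\<^sub>m n" "X \<in> carrier_mat n p"
  shows "A * (B * X) = X"
  using assoc_mult_mat[OF assms(1,2,4)] assms(3,4) by simp

lemma add_uminus_mat: "(A :: complex mat) \<in> carrier_mat n m \<Longrightarrow> A + - A = 0\<^sub>m n m"
  by (intro eq_matI) auto

lemma zero_mat_mult_vec [simp]: "v \<in> carrier_vec m \<Longrightarrow> 0\<^sub>m n m *\<^sub>v v = 0\<^sub>v n"
  by (intro eq_vecI) (auto simp: scalar_prod_def)

lemma qform_mult_vec_left:
  assumes G: "G \<in> carrier_mat n m" and x: "x \<in> carrier_vec m" and M: "M \<in> carrier_mat n k"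
    and y: "y \<in> carrier_vec k"
  shows "qform (G *\<^sub>v x) M y = qform x (ctrans G * M) y"
proof -
  have My: "M *\<^sub>v y \<in> carrier_vec n" using M y by auto
  have "qform (G *\<^sub>v x) M y = (\<Sum>i<n. cnj (\<Sum>j<m. G $$ (i, j) * x $ j) * (M *\<^sub>v y) $ i)"
    using G x M y unfolding qform_def
    by (auto simp: scalar_prod_def lessThan_atLeast0 intro!: sum.cong)
  also have "\<dots> = (\<Sum>i<n. \<Sum>j<m. cnj (x $ j) * (cnj (G $$ (i, j)) * (M *\<^sub>v y) $ i))"
    by (simp add: sum_distrib_right sum_distrib_left mult_ac)
  also have "\<dots> = (\<Sum>j<m. \<Sum>i<n. cnj (x $ j) * (cnj (G $$ (i, j)) * (M *\<^sub>v y) $ i))"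
    by (rule sum.swap)
  also have "\<dots> = qform x (ctrans G * M) y"
  proof -
    have "(ctrans G *\<^sub>v (M *\<^sub>v y)) $ j = (\<Sum>i<n. cnj (G $$ (i, j)) * (M *\<^sub>v y) $ i)" if "j < m" for j
      using G M y My that by (auto simp: scalar_prod_def lessThan_atLeast0)
    then show ?thesis
      unfolding qform_def assoc_mult_mat_vec[OF ctrans_carrier_mat[OF G] M y] using x
      by (auto simp: sum_distrib_left intro!: sum.cong)
  qed
  finally show ?thesis .
qed

lemma qform_mult_vec_right:
  "M \<in> carrier_mat n k \<Longrightarrow> G \<in> carrier_mat k p \<Longrightarrow> y \<in> carrier_vec p \<Longrightarrow>
    qform x M (G *\<^sub>v y) = qform x (M * G) y"
  unfolding qform_def by simp

lemma qform_one: "x \<in> carrier_vec n \<Longrightarrow> qform x (1\<^sub>m n) x = x \<bullet>c x"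
  unfolding qform_def scalar_prod_def by (auto simp: mult.commute intro!: sum.cong)

lemma qform_zero_vec_left [simp]: "qform (0\<^sub>v n) A y = 0"
  unfolding qform_def by simp

lemma qform_zero_vec_right [simp]:
  "dim_col A = m \<Longrightarrow> dim_vec x \<le> dim_row A \<Longrightarrow> qform x A (0\<^sub>v m) = 0"
  unfolding qform_def by (auto intro!: sum.neutral)

lemma qform_zero_mat [simp]:
  "x \<in> carrier_vec n \<Longrightarrow> y \<in> carrier_vec m \<Longrightarrow> qform x (0\<^sub>m n m) y = 0"
  unfolding qform_def by (auto simp: scalar_prod_def)

lemma sum_lessThan_split:
  "k \<le> (n::nat) \<Longrightarrow> (\<Sum>j<n. f j) = (\<Sum>j<k. f j) + (\<Sum>j<n - k. f (k + j))"
proof -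
  assume k: "k \<le> n"
  have split: "{..<n} = {..<k} \<union> {k..<n}" using k by auto
  have "(\<Sum>j<n. f j) = (\<Sum>j<k. f j) + (\<Sum>j\<in>{k..<n}. f j)"
    unfolding split by (subst sum.union_disjoint) auto
  also have "(\<Sum>j\<in>{k..<n}. f j) = (\<Sum>j<n - k. f (k + j))"
    using k by (intro sum.reindex_bij_witness[of _ "\<lambda>j. k + j" "\<lambda>j. j - k"]) auto
  finally show ?thesis .
qed

lemma qform_append_four_block_mat:
  assumes A: "A \<in> carrier_mat n1 m1" and B: "B \<in> carrier_mat n1 m2"
    and C: "C \<in> carrier_mat n2 m1" and D: "D \<in> carrier_mat n2 m2"
    and a: "a \<in> carrier_vec n1" and b: "b \<in> carrier_vec n2"
    and u: "u \<in> carrier_vec m1" and v: "v \<in> carrier_vec m2"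
  shows "qform (a @\<^sub>v b) (four_block_mat A B C D) (u @\<^sub>v v) =
    qform a A u + qform a B v + qform b C u + qform b D v"
proof -
  have "qform (a @\<^sub>v b) (four_block_mat A B C D) (u @\<^sub>v v) =
     (\<Sum>i<n1 + n2. cnj ((a @\<^sub>v b) $ i) * (((A *\<^sub>v u + B *\<^sub>v v) @\<^sub>v (C *\<^sub>v u + D *\<^sub>v v)) $ i))"
    unfolding qform_def four_block_mat_mult_vec[OF A B C D u v] using a b by simp
  also have "\<dots> = (\<Sum>i<n1. cnj (a $ i) * ((A *\<^sub>v u + B *\<^sub>v v) $ i)) +
      (\<Sum>i<n2. cnj (b $ i) * ((C *\<^sub>v u + D *\<^sub>v v) $ i))"
    using a b A B C D u v by (subst sum_lessThan_split[of n1]) auto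
  also have "\<dots> = qform a A u + qform a B v + qform b C u + qform b D v"
    unfolding qform_def using a b A B C D u v by (simp add: sum.distrib distrib_left)
  finally show ?thesis .
qed

lemma subm_carrier_mat [simp]: "subm S a b c d \<in> carrier_mat (b - a) (d - c)"
  unfolding subm_def by auto

lemma dim_subm [simp]: "dim_row (subm S a b c d) = b - a" "dim_col (subm S a b c d) = d - c"
  unfolding subm_def by auto

lemma index_subm [simp]:
  "i < b - a \<Longrightarrow> j < d - c \<Longrightarrow> subm S a b c d $$ (i, j) = S $$ (a + i, c + j)"
  unfolding subm_def by auto

lemma subv_carrier_vec [simp]: "subv z a b \<in> carrier_vec (b - a)"
  unfolding subv_def by auto

lemma subv_carrier_vec_iff [simp]: "subv z a b \<in> carrier_vec n \<longleftrightarrow> b - a = n"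
  unfolding carrier_vec_def subv_def by auto

lemma dim_subv [simp]: "dim_vec (subv z a b) = b - a"
  unfolding subv_def by auto

lemma index_subv [simp]: "i < b - a \<Longrightarrow> subv z a b $ i = z $ (a + i)"
  unfolding subv_def by auto

lemma four_block_mat_subm:
  "S \<in> carrier_mat n n \<Longrightarrow> k \<le> n \<Longrightarrow>
    S = four_block_mat (subm S 0 k 0 k) (subm S 0 k k n) (subm S k n 0 k) (subm S k n k n)"
  by (intro eq_matI) auto

lemma append_subv: "z \<in> carrier_vec n \<Longrightarrow> k \<le> n \<Longrightarrow> z = subv z 0 k @\<^sub>v subv z k n"
  by (intro eq_vecI) auto

lemma subm_subm:
  "b' \<le> b - a \<Longrightarrow> d' \<le> d - c \<Longrightarrow>
    subm (subm S a b c d) a' b' c' d' = subm S (a + a') (a + b') (c + c') (c + d')"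
  by (intro eq_matI) (auto simp: add.assoc)

lemma subv_subv: "b' \<le> b - a \<Longrightarrow> subv (subv z a b) a' b' = subv z (a + a') (a + b')"
  by (intro eq_vecI) (auto simp: add.assoc)

lemma subm_ctrans:
  "S \<in> carrier_mat n m \<Longrightarrow> b \<le> m \<Longrightarrow> d \<le> n \<Longrightarrow> subm (ctrans S) a b c d = ctrans (subm S c d a b)"
  by (intro eq_matI) auto

lemma subm_four_block_mat:
  assumes "A \<in> carrier_mat k k" "B \<in> carrier_mat k l" "C \<in> carrier_mat l k" "D \<in> carrier_mat l l"
  shows "subm (four_block_mat A B C D) 0 k 0 k = A"
    and "subm (four_block_mat A B C D) k (k + l) k (k + l) = D"
  using assms by (intro eq_matI; auto)+

lemma hpdD:
  "hpd n S \<Longrightarrow> S \<in> carrier_mat n n"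
  "hpd n S \<Longrightarrow> ctrans S = S"
  "hpd n S \<Longrightarrow> x \<in> carrier_vec n \<Longrightarrow> x \<noteq> 0\<^sub>v n \<Longrightarrow> Re (qform x S x) > 0"
  unfolding hpd_def by auto

lemma hpd_det_nonzero: assumes "hpd n S" shows "det S \<noteq> 0"
proof
  assume "det S = 0"
  then obtain v where v: "v \<in> carrier_vec n" "v \<noteq> 0\<^sub>v n" "S *\<^sub>v v = 0\<^sub>v n"
    using det_0_iff_vec_prod_zero_field[OF hpdD(1)[OF assms]] by auto
  have "qform v S v = 0" unfolding qform_def v(3) using v(1) by (auto intro!: sum.neutral)
  then show False using hpdD(3)[OF assms v(1,2)] by auto
qed

lemma hpd_minv:
  assumes "hpd n S"
  shows "minv S \<in> carrier_mat n n" "S * minv S = 1\<^sub>m n" "minv S * S = 1\<^sub>m n"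
  using minv_inverse[OF hpdD(1) hpd_det_nonzero, OF assms assms] by auto

lemma hpd_minv_hermitian: assumes "hpd n S" shows "ctrans (minv S) = minv S"
proof -
  note S = hpdD(1,2)[OF assms] and M = hpd_minv[OF assms]
  have "ctrans (minv S) * S = 1\<^sub>m n"
    using ctrans_inverse[OF S(1) M(1,2)] S(2) by simp
  then have "S * ctrans (minv S) = 1\<^sub>m n"
    using mat_mult_left_right_inverse[OF ctrans_carrier_mat[OF M(1)] S(1)] by simp
  then show ?thesis using minv_eq[OF S(1), of "ctrans (minv S)"] M(1) by simp
qed

lemma hpd_congruence:
  assumes S: "hpd n S" and G: "G \<in> carrier_mat n n" and "det G \<noteq> 0"
  shows "hpd n (G * S * ctrans G)"
proof -
  note Sc = hpdD(1,2)[OF S]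
  obtain B where B: "B \<in> carrier_mat n n" "G * B = 1\<^sub>m n" "B * G = 1\<^sub>m n"
    using obtain_inverse_mat[OF G assms(3)] by metis
  have BG: "ctrans B * ctrans G = 1\<^sub>m n"
    using ctrans_inverse[OF G B(1,2)] .
  have "ctrans (G * S * ctrans G) = G * (ctrans S * ctrans G)"
    using G Sc by (simp add: ctrans_mult)
  also have "\<dots> = G * S * ctrans G"
    using assoc_mult_mat[OF G Sc(1) ctrans_carrier_mat[OF G]] Sc by simp
  finally have herm: "ctrans (G * S * ctrans G) = G * S * ctrans G" .
  have pos: "Re (qform x (G * S * ctrans G) x) > 0" if x: "x \<in> carrier_vec n" "x \<noteq> 0\<^sub>v n" for x
  proof -
    let ?y = "ctrans G *\<^sub>v x"
    have y: "?y \<in> carrier_vec n" using mult_mat_vec_carrier[OF ctrans_carrier_mat[OF G] x(1)] .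
    have inv: "ctrans B *\<^sub>v ?y = x"
      using BG B G x by (simp add: assoc_mult_mat_vec[symmetric, of _ n n _ n])
    have "?y \<noteq> 0\<^sub>v n"
    proof
      assume "?y = 0\<^sub>v n"
      then have "ctrans B *\<^sub>v ?y = 0\<^sub>v n" using B by auto
      then show False using inv x by simp
    qed
    then have "Re (qform ?y S ?y) > 0" using hpdD(3)[OF S y] by auto
    also have "qform ?y S ?y = qform x (G * S) ?y"
      using qform_mult_vec_left[of "ctrans G" n n x S n ?y] G x Sc y by auto
    also have "\<dots> = qform x (G * S * ctrans G) x"
      using qform_mult_vec_right[of "G * S" n n "ctrans G" n x x] G Sc x by auto
    finally show ?thesis .
  qed
  show ?thesis unfolding hpd_def using G Sc herm pos by auto
qed

lemma hpd_principal_blocks: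
  assumes S: "hpd n S" and k: "k \<le> n"
  shows "hpd k (subm S 0 k 0 k)" "hpd (n - k) (subm S k n k n)"
proof -
  note Sc = hpdD(1,2)[OF S]
  note split = four_block_mat_subm[OF Sc(1) k]
  have nk: "n = k + (n - k)" using k by simp
  have zero_append: "0\<^sub>v k @\<^sub>v 0\<^sub>v (n - k) = (0\<^sub>v n :: complex vec)" using k by (intro eq_vecI) auto
  have "Re (qform x (subm S 0 k 0 k) x) > 0" if x: "x \<in> carrier_vec k" "x \<noteq> 0\<^sub>v k" for x
  proof -
    have "x @\<^sub>v 0\<^sub>v (n - k) \<noteq> 0\<^sub>v n"
      using append_vec_eq[OF x(1)] x zero_append by (metis zero_carrier_vec)
    then have "Re (qform (x @\<^sub>v 0\<^sub>v (n - k)) S (x @\<^sub>v 0\<^sub>v (n - k))) > 0"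
      using hpdD(3)[OF S] x nk by (metis append_carrier_vec zero_carrier_vec)
    also have "qform (x @\<^sub>v 0\<^sub>v (n - k)) S (x @\<^sub>v 0\<^sub>v (n - k)) = qform x (subm S 0 k 0 k) x"
      by (subst split, subst qform_append_four_block_mat) (use x in auto)
    finally show ?thesis .
  qed
  moreover have "ctrans (subm S 0 k 0 k) = subm S 0 k 0 k"
    using subm_ctrans[OF Sc(1), of k k 0 0] k Sc(2) by simp
  ultimately show "hpd k (subm S 0 k 0 k)" unfolding hpd_def by auto
  have "Re (qform x (subm S k n k n) x) > 0" if x: "x \<in> carrier_vec (n - k)" "x \<noteq> 0\<^sub>v (n - k)" for x
  proof -
    have "0\<^sub>v k @\<^sub>v x \<noteq> 0\<^sub>v n"
      using append_vec_eq[of "0\<^sub>v k" k "0\<^sub>v k" x "0\<^sub>v (n - k)"] x zero_append by auto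
    then have "Re (qform (0\<^sub>v k @\<^sub>v x) S (0\<^sub>v k @\<^sub>v x)) > 0"
      using hpdD(3)[OF S] x nk by (metis append_carrier_vec zero_carrier_vec)
    also have "qform (0\<^sub>v k @\<^sub>v x) S (0\<^sub>v k @\<^sub>v x) = qform x (subm S k n k n) x"
      by (subst split, subst qform_append_four_block_mat) (use x in auto)
    finally show ?thesis .
  qed
  moreover have "ctrans (subm S k n k n) = subm S k n k n"
    using subm_ctrans[OF Sc(1), of n n k k] k Sc(2) by simp
  ultimately show "hpd (n - k) (subm S k n k n)" unfolding hpd_def by auto
qed

lemma qform_minv_congruence:
  assumes H: "H \<in> carrier_mat n n" and "det H \<noteq> 0" and T: "hpd n T" and w: "w \<in> carrier_vec n"
  shows "qform (H *\<^sub>v w) (minv (H * T * ctrans H)) (H *\<^sub>v w) = qform w (minv T) w"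
proof -
  obtain Hi where Hi: "Hi \<in> carrier_mat n n" "H * Hi = 1\<^sub>m n" "Hi * H = 1\<^sub>m n"
    using obtain_inverse_mat[OF H assms(2)] by metis
  note Tc = hpdD(1)[OF T]
  define Ti where "Ti = minv T"
  have Ti: "Ti \<in> carrier_mat n n" "T * Ti = 1\<^sub>m n" using hpd_minv[OF T] unfolding Ti_def by auto
  have HH: "ctrans H * ctrans Hi = 1\<^sub>m n" using ctrans_inverse[OF Hi(1) H Hi(3)] .
  have cH: "ctrans H \<in> carrier_mat n n" "ctrans Hi \<in> carrier_mat n n" using H Hi by auto
  note assoc = assoc_mult_mat[of _ n n _ n _ n] mult_carrier_mat[of _ n n _ n]
  \<comment> \<open>\<open>(H T H\<^sup>\<dagger>)\<^sup>-\<^sup>1 = H\<^sup>-\<^sup>\<dagger> T\<^sup>-\<^sup>1 H\<^sup>-\<^sup>1\<close>\<close>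
  have "(H * T * ctrans H) * (ctrans Hi * Ti * Hi) = H * (T * (ctrans H * (ctrans Hi * (Ti * Hi))))"
    using H Tc cH Ti Hi by (simp add: assoc)
  also have "\<dots> = 1\<^sub>m n"
    using mult_right_inverse_cancel[OF cH HH, of "Ti * Hi" n] mult_right_inverse_cancel[OF Tc Ti, of Hi n]
      Ti Hi by simp
  finally have inv: "minv (H * T * ctrans H) = ctrans Hi * Ti * Hi"
    by (rule minv_eq[rotated 2]) (use H Tc cH Ti Hi in auto)
  have "qform (H *\<^sub>v w) (ctrans Hi * Ti * Hi) (H *\<^sub>v w) = qform w (ctrans H * (ctrans Hi * Ti * Hi)) (H *\<^sub>v w)"
    by (rule qform_mult_vec_left[OF H w]) (use cH Ti Hi H w in auto)
  also have "\<dots> = qform w (ctrans H * (ctrans Hi * Ti * Hi) * H) w"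
    by (rule qform_mult_vec_right) (use cH Ti Hi H w in auto)
  also have "ctrans H * (ctrans Hi * Ti * Hi) * H = ctrans H * (ctrans Hi * (Ti * (Hi * H)))"
    using cH Ti Hi H by (simp add: assoc)
  also have "\<dots> = Ti"
    unfolding Hi(3) using mult_right_inverse_cancel[OF cH HH, of Ti] Ti by simp
  finally show ?thesis unfolding inv Ti_def .
qed

definition lower_left_zero :: "nat \<Rightarrow> 'a :: zero mat \<Rightarrow> bool" where
  "lower_left_zero k G \<longleftrightarrow> (\<forall>i j. k \<le> i \<longrightarrow> i < dim_row G \<longrightarrow> j < k \<longrightarrow> G $$ (i, j) = 0)"

lemma lower_left_zeroD: "lower_left_zero k G \<Longrightarrow> k \<le> i \<Longrightarrow> i < dim_row G \<Longrightarrow> j < k \<Longrightarrow> G $$ (i, j) = 0"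
  unfolding lower_left_zero_def by blast

lemma upper_triangular_lower_left_zero: "upper_triangular A \<Longrightarrow> lower_left_zero k A"
  unfolding lower_left_zero_def by auto

lemma lower_left_zero_four_block_diag:
  assumes "A \<in> carrier_mat k k" "D \<in> carrier_mat l l" "lower_left_zero j D"
  shows "lower_left_zero (k + j) (four_block_mat A (0\<^sub>m k l) (0\<^sub>m l k) D)"
  unfolding lower_left_zero_def using assms lower_left_zeroD[OF assms(3)] by auto

lemma lower_left_zero_0 [simp]: "lower_left_zero 0 G"
  unfolding lower_left_zero_def by simp

lemma lower_left_zero_subm:
  "lower_left_zero m G \<Longrightarrow> G \<in> carrier_mat n n \<Longrightarrow> t \<le> m \<Longrightarrow> lower_left_zero (m - t) (subm G t n t n)"
  unfolding lower_left_zero_def by auto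

lemma subm_mult_lower_left_zero:
  assumes G: "G \<in> carrier_mat n n" and k: "k \<le> n" and "lower_left_zero k G"
    and A: "A \<in> carrier_mat n p" and "c \<le> d" "d \<le> p"
  shows "subm (G * A) k n c d = subm G k n k n * subm A k n c d"
proof (rule eq_matI)
  fix i j assume "i < dim_row (subm G k n k n * subm A k n c d)" "j < dim_col (subm G k n k n * subm A k n c d)"
  then have i: "i < n - k" and j: "j < d - c" by auto
  have "subm (G * A) k n c d $$ (i, j) = (\<Sum>q<n. G $$ (k + i, q) * A $$ (q, c + j))"
    using i j G A assms(5,6) by (auto simp: scalar_prod_def lessThan_atLeast0)
  also have "\<dots> = (\<Sum>q<k. G $$ (k + i, q) * A $$ (q, c + j)) + (\<Sum>q<n - k. G $$ (k + i, k + q) * A $$ (k + q, c + j))"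
    by (rule sum_lessThan_split[OF k])
  also have "(\<Sum>q<k. G $$ (k + i, q) * A $$ (q, c + j)) = 0"
    using lower_left_zeroD[OF assms(3)] i G by auto
  also have "(\<Sum>q<n - k. G $$ (k + i, k + q) * A $$ (k + q, c + j)) = (subm G k n k n * subm A k n c d) $$ (i, j)"
    using i j by (auto simp: scalar_prod_def lessThan_atLeast0)
  finally show "subm (G * A) k n c d $$ (i, j) = (subm G k n k n * subm A k n c d) $$ (i, j)" by simp
qed auto

lemma subv_mult_vec_lower_left_zero:
  assumes G: "G \<in> carrier_mat n n" and k: "k \<le> n" and "lower_left_zero k G" and z: "z \<in> carrier_vec n"
  shows "subv (G *\<^sub>v z) k n = subm G k n k n *\<^sub>v subv z k n"
proof (rule eq_vecI)
  fix i assume "i < dim_vec (subm G k n k n *\<^sub>v subv z k n)"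
  then have i: "i < n - k" by auto
  have "subv (G *\<^sub>v z) k n $ i = (\<Sum>q<n. G $$ (k + i, q) * z $ q)"
    using i G z by (auto simp: scalar_prod_def lessThan_atLeast0)
  also have "\<dots> = (\<Sum>q<k. G $$ (k + i, q) * z $ q) + (\<Sum>q<n - k. G $$ (k + i, k + q) * z $ (k + q))"
    by (rule sum_lessThan_split[OF k])
  also have "(\<Sum>q<k. G $$ (k + i, q) * z $ q) = 0"
    using lower_left_zeroD[OF assms(3)] i G by auto
  also have "(\<Sum>q<n - k. G $$ (k + i, k + q) * z $ (k + q)) = (subm G k n k n *\<^sub>v subv z k n) $ i"
    using i by (auto simp: scalar_prod_def lessThan_atLeast0)
  finally show "subv (G *\<^sub>v z) k n $ i = (subm G k n k n *\<^sub>v subv z k n) $ i" by simp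
qed auto

lemma subm_congruence_lower_left_zero:
  assumes G: "G \<in> carrier_mat n n" and k: "k \<le> n" and llz: "lower_left_zero k G"
    and S: "S \<in> carrier_mat n n"
  shows "subm (G * S * ctrans G) k n k n = subm G k n k n * subm S k n k n * ctrans (subm G k n k n)"
proof -
  have GS: "G * S \<in> carrier_mat n n" using G S by auto
  have GSG: "ctrans (G * S * ctrans G) \<in> carrier_mat n n" using G S by auto
  have "subm (G * S * ctrans G) k n k n = ctrans (subm (ctrans (G * S * ctrans G)) k n k n)"
    using subm_ctrans[OF GSG, where a = k and b = n and c = k and d = n] k by simp
  also have "ctrans (G * S * ctrans G) = G * ctrans (G * S)"
    using G S by (simp add: ctrans_mult)
  also have "subm (G * ctrans (G * S)) k n k n = subm G k n k n * subm (ctrans (G * S)) k n k n"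
    by (rule subm_mult_lower_left_zero[OF G k llz]) (use GS k in auto)
  also have "subm (ctrans (G * S)) k n k n = ctrans (subm G k n k n * subm S k n k n)"
    using subm_ctrans[OF GS, where a = k and b = n and c = k and d = n] subm_mult_lower_left_zero[OF G k llz S] k by simp
  finally show ?thesis
    by (simp add: ctrans_mult)
qed

lemma det_lower_left_zero:
  assumes G: "G \<in> carrier_mat n n" and k: "k \<le> n" and "lower_left_zero k G"
  shows "det G = det (subm G 0 k 0 k) * det (subm G k n k n)"
proof -
  have zero: "subm G k n 0 k = 0\<^sub>m (n - k) k"
    using lower_left_zeroD[OF assms(3)] G by (intro eq_matI) auto
  have "det G = det (four_block_mat (subm G 0 k 0 k) (subm G 0 k k n) (subm G k n 0 k) (subm G k n k n))"
    using four_block_mat_subm[OF G k] by simp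
  also have "\<dots> = det (subm G 0 k 0 k) * det (subm G k n k n)"
    by (rule det_four_block_mat_lower_left_zero[OF _ _ zero]) auto
  finally show ?thesis .
qed

lemma lower_left_zero_mult:
  assumes A: "A \<in> carrier_mat n n" and B: "B \<in> carrier_mat n n"
    and "lower_left_zero k A" "lower_left_zero k B"
  shows "lower_left_zero k (A * B)"
  unfolding lower_left_zero_def
proof (intro allI impI)
  fix i j assume ij: "k \<le> i" "i < dim_row (A * B)" "j < k"
  then have "A $$ (i, q) * B $$ (q, j) = 0" if "q < n" for q
    using lower_left_zeroD[OF assms(3)] lower_left_zeroD[OF assms(4)] A B that
    by (cases "q < k") auto
  then show "(A * B) $$ (i, j) = 0"
    using A B ij by (auto simp: scalar_prod_def intro!: sum.neutral)
qed

lemma subm_mult_right_lower_left_zero: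
  assumes B: "B \<in> carrier_mat n n" and A: "A \<in> carrier_mat n n" and k: "k \<le> n"
    and "lower_left_zero k A"
  shows "subm (B * A) k n 0 k = subm B k n 0 k * subm A 0 k 0 k"
proof (rule eq_matI)
  fix i j assume "i < dim_row (subm B k n 0 k * subm A 0 k 0 k)" "j < dim_col (subm B k n 0 k * subm A 0 k 0 k)"
  then have i: "i < n - k" and j: "j < k" by auto
  have "subm (B * A) k n 0 k $$ (i, j) = (\<Sum>q<n. B $$ (k + i, q) * A $$ (q, j))"
    using i j A B k by (auto simp: scalar_prod_def lessThan_atLeast0)
  also have "\<dots> = (\<Sum>q<k. B $$ (k + i, q) * A $$ (q, j)) + (\<Sum>q<n - k. B $$ (k + i, k + q) * A $$ (k + q, j))"
    by (rule sum_lessThan_split[OF k])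
  also have "(\<Sum>q<n - k. B $$ (k + i, k + q) * A $$ (k + q, j)) = 0"
    using lower_left_zeroD[OF assms(4)] j A by auto
  also have "(\<Sum>q<k. B $$ (k + i, q) * A $$ (q, j)) = (subm B k n 0 k * subm A 0 k 0 k) $$ (i, j)"
    using i j by (auto simp: scalar_prod_def lessThan_atLeast0)
  finally show "subm (B * A) k n 0 k $$ (i, j) = (subm B k n 0 k * subm A 0 k 0 k) $$ (i, j)" by simp
qed auto

lemma lower_left_zero_inverse:
  fixes A B :: "complex mat"
  assumes A: "A \<in> carrier_mat n n" and B: "B \<in> carrier_mat n n" and BA: "B * A = 1\<^sub>m n"
    and llz: "lower_left_zero k A"
  shows "lower_left_zero k B"
proof (cases "k \<le> n")
  case k: True
  have "det A \<noteq> 0"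
    using det_nonzero_of_right_inverse[OF A B] mat_mult_left_right_inverse[OF B A BA] by blast
  then have "det (subm A 0 k 0 k) \<noteq> 0"
    using det_lower_left_zero[OF A k llz] by auto
  moreover have "subm A 0 k 0 k \<in> carrier_mat k k" using subm_carrier_mat[of A 0 k 0 k] by simp
  ultimately obtain A11i where A11i: "A11i \<in> carrier_mat k k" "subm A 0 k 0 k * A11i = 1\<^sub>m k"
    using obtain_inverse_mat by metis
  \<comment> \<open>the lower left block of \<open>B * A = 1\<close> is \<open>B\<^sub>2\<^sub>1 A\<^sub>1\<^sub>1 = 0\<close>, and \<open>A\<^sub>1\<^sub>1\<close> is invertible\<close>
  have "subm B k n 0 k * subm A 0 k 0 k = subm (1\<^sub>m n) k n 0 k"
    using subm_mult_right_lower_left_zero[OF B A k llz] BA by simp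
  also have "\<dots> = 0\<^sub>m (n - k) k"
    by (intro eq_matI) auto
  finally have B21A11: "subm B k n 0 k * subm A 0 k 0 k = 0\<^sub>m (n - k) k" .
  have "subm B k n 0 k = subm B k n 0 k * (subm A 0 k 0 k * A11i)"
    using A11i(2) by simp
  also have "\<dots> = (subm B k n 0 k * subm A 0 k 0 k) * A11i"
    using assoc_mult_mat[of "subm B k n 0 k" "n - k" k "subm A 0 k 0 k" k A11i k] A11i(1)
      subm_carrier_mat[of B k n 0 k] subm_carrier_mat[of A 0 k 0 k] by simp
  also have "\<dots> = 0\<^sub>m (n - k) k"
    unfolding B21A11 using A11i(1) by simp
  finally have zero: "subm B k n 0 k = 0\<^sub>m (n - k) k" .
  show ?thesis
    unfolding lower_left_zero_def
  proof (intro allI impI)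
    fix i j assume ij: "k \<le> i" "i < dim_row B" "j < k"
    then have "B $$ (i, j) = subm B k n 0 k $$ (i - k, j)"
      using carrier_matD(1)[OF B] by simp
    then show "B $$ (i, j) = 0"
      unfolding zero using ij carrier_matD(1)[OF B] by simp
  qed
next
  case False
  then show ?thesis
    unfolding lower_left_zero_def using carrier_matD(1)[OF B] by simp
qed

lemma blk_less_iff:
  "t \<le> m \<Longrightarrow> blk t m j < blk t m i \<longleftrightarrow> (j < t \<and> t \<le> i) \<or> (j < m \<and> m \<le> i)"
  unfolding blk_def by auto

lemma Gset_iff:
  assumes tr: "t + r \<le> N"
  shows "G \<in> Gset N t r \<longleftrightarrow>
    G \<in> carrier_mat N N \<and> det G \<noteq> 0 \<and> lower_left_zero t G \<and> lower_left_zero (t + r) G"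
    (is "_ \<longleftrightarrow> ?rhs")
proof
  assume G: "G \<in> Gset N t r"
  then have "G \<in> carrier_mat N N" "invertible_mat G"
    and zero: "\<And>i j. i < N \<Longrightarrow> j < N \<Longrightarrow> blk t (t + r) j < blk t (t + r) i \<Longrightarrow> G $$ (i, j) = 0"
    unfolding Gset_def by auto
  then show ?rhs
    unfolding lower_left_zero_def invertible_mat_iff_det[OF \<open>G \<in> carrier_mat N N\<close>]
    using tr by (auto simp: blk_less_iff intro!: zero)
next
  assume ?rhs
  then have G: "G \<in> carrier_mat N N" and "det G \<noteq> 0"
    and llz_t: "lower_left_zero t G" and llz_m: "lower_left_zero (t + r) G" by auto
  let ?m = "t + r"
  define H where "H = subm G t N t N"
  have rN: "r \<le> N - t" using tr by simp
  have "det (subm G 0 t 0 t) * det H \<noteq> 0"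
    using \<open>det G \<noteq> 0\<close> det_lower_left_zero[OF G _ llz_t] tr unfolding H_def by simp
  moreover have "det H = det (subm G t ?m t ?m) * det (subm G ?m N ?m N)"
    using det_lower_left_zero[of H "N - t" r] lower_left_zero_subm[OF llz_m G, of t] rN tr
    unfolding H_def by (simp add: subm_subm)
  ultimately have "det (subm G 0 t 0 t) \<noteq> 0" "det (subm G t ?m t ?m) \<noteq> 0" "det (subm G ?m N ?m N) \<noteq> 0"
    by auto
  then have "invertible_mat (subm G 0 t 0 t)" "invertible_mat (subm G t ?m t ?m)"
    "invertible_mat (subm G ?m N ?m N)"
    by (simp_all add: invertible_mat_iff_det[OF subm_carrier_mat[unfolded diff_zero]]
        invertible_mat_iff_det[OF subm_carrier_mat])
  moreover have "G $$ (i, j) = 0" if "i < N" "blk t ?m j < blk t ?m i" for i j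
    using that llz_t llz_m G by (auto simp: blk_less_iff lower_left_zero_def)
  ultimately show "G \<in> Gset N t r"
    unfolding Gset_def using G \<open>det G \<noteq> 0\<close> invertible_mat_iff_det[OF G] by auto
qed

lemma Fset_mult_vec:
  assumes G: "G \<in> carrier_mat N N" and "lower_left_zero t G" and f: "f \<in> Fset N t"
  shows "G *\<^sub>v f \<in> Fset N t"
proof -
  have fc: "f \<in> carrier_vec N" using f unfolding Fset_def by auto
  have "G $$ (i, j) * f $ j = 0" if "t \<le> i" "i < N" "j < N" for i j
    using lower_left_zeroD[OF assms(2)] f G that unfolding Fset_def by (cases "j < t") auto
  then have "(G *\<^sub>v f) $ i = 0" if "t \<le> i" "i < N" for i
    using G fc that by (auto simp: scalar_prod_def intro!: sum.neutral)
  then show ?thesis unfolding Fset_def using G fc by auto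
qed

lemma subv_Fset: "f \<in> Fset N t \<Longrightarrow> t \<le> k \<Longrightarrow> subv f k N = 0\<^sub>v (N - k)"
  unfolding Fset_def by (intro eq_vecI) auto

lemma act_act:
  assumes G: "G1 \<in> carrier_mat N N" "G2 \<in> carrier_mat N N" and f: "f1 \<in> carrier_vec N" "f2 \<in> carrier_vec N"
    and z: "z \<in> carrier_vec N" and S: "S \<in> carrier_mat N N"
  shows "act (G1, f1) (act (G2, f2) (z, S)) = act (G1 * G2, G1 *\<^sub>v f2 + f1) (z, S)"
proof -
  have "G1 *\<^sub>v (G2 *\<^sub>v z + f2) + f1 = (G1 * G2) *\<^sub>v z + (G1 *\<^sub>v f2 + f1)"
    using G f z by (simp add: mult_add_distrib_mat_vec assoc_mult_mat_vec assoc_add_vec[of _ N])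
  moreover have "G1 * (G2 * S * ctrans G2) * ctrans G1 = G1 * G2 * S * ctrans (G1 * G2)"
    using G S by (simp add: ctrans_mult assoc_mult_mat[of _ N N _ N _ N] mult_carrier_mat[of _ N N _ N])
  ultimately show ?thesis unfolding act_def by simp
qed

lemma Lset_mult:
  assumes tr: "t + r \<le> N" and "(G1, f1) \<in> Lset N t r" "(G2, f2) \<in> Lset N t r"
  shows "(G1 * G2, G1 *\<^sub>v f2 + f1) \<in> Lset N t r"
proof -
  have G: "G1 \<in> carrier_mat N N" "det G1 \<noteq> 0" "lower_left_zero t G1" "lower_left_zero (t + r) G1"
    "G2 \<in> carrier_mat N N" "det G2 \<noteq> 0" "lower_left_zero t G2" "lower_left_zero (t + r) G2"
    and f: "f1 \<in> Fset N t" "f2 \<in> Fset N t"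
    using assms(2,3) Gset_iff[OF tr] unfolding Lset_def by auto
  have "G1 * G2 \<in> Gset N t r"
    unfolding Gset_iff[OF tr] using G by (auto simp: det_mult lower_left_zero_mult)
  moreover have "G1 *\<^sub>v f2 + f1 \<in> Fset N t"
    using Fset_mult_vec[OF G(1,3) f(2)] f(1) unfolding Fset_def by auto
  ultimately show ?thesis unfolding Lset_def by auto
qed

lemma act_act_Lset:
  assumes tr: "t + r \<le> N" and g1: "g1 \<in> Lset N t r" and g2: "g2 \<in> Lset N t r" and x: "x \<in> Dset N"
  shows "\<exists>g \<in> Lset N t r. act g1 (act g2 x) = act g x"
proof -
  obtain G1 f1 G2 f2 z S where g: "g1 = (G1, f1)" "g2 = (G2, f2)" and x': "x = (z, S)"
    by (metis prod.exhaust)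
  have "G1 \<in> carrier_mat N N" "G2 \<in> carrier_mat N N" "f1 \<in> carrier_vec N" "f2 \<in> carrier_vec N"
    "z \<in> carrier_vec N" "S \<in> carrier_mat N N"
    using g1 g2 x Gset_iff[OF tr] unfolding g x' Lset_def Fset_def Dset_def hpd_def by auto
  then show ?thesis
    unfolding g x' using act_act Lset_mult[OF tr g1[unfolded g] g2[unfolded g]] by blast
qed

lemma act_Dset:
  assumes "(G, f) \<in> Lset N t r" "t + r \<le> N" "(z, S) \<in> Dset N"
  shows "act (G, f) (z, S) \<in> Dset N"
proof -
  have "G \<in> carrier_mat N N" "det G \<noteq> 0" "f \<in> carrier_vec N" "z \<in> carrier_vec N" "hpd N S"
    using assms Gset_iff[OF assms(2)] unfolding Lset_def Dset_def Fset_def by auto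
  then show ?thesis
    unfolding act_def Dset_def by (auto intro: hpd_congruence)
qed

section \<open>Schur complements\<close>

lemma hermitian_four_block_mat_lower_left:
  assumes A: "A \<in> carrier_mat k k" and B: "B \<in> carrier_mat k l" and C: "C \<in> carrier_mat l k"
    and D: "D \<in> carrier_mat l l" and herm: "ctrans (four_block_mat A B C D) = four_block_mat A B C D"
  shows "C = ctrans B"
proof (rule eq_matI)
  fix i j assume "i < dim_row (ctrans B)" "j < dim_col (ctrans B)"
  then have i: "i < l" and j: "j < k" using B by auto
  have "C $$ (i, j) = four_block_mat A B C D $$ (k + i, j)" using A B C D i j by simp
  also have "\<dots> = cnj (four_block_mat A B C D $$ (j, k + i))"
    by (subst herm[symmetric]) (use A D i j in simp)
  also have "\<dots> = ctrans B $$ (i, j)" using A B C D i j by simp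
  finally show "C $$ (i, j) = ctrans B $$ (i, j)" .
qed (use B C in auto)

lemma minv_four_block_diag:
  assumes P: "P \<in> carrier_mat k k" "det P \<noteq> 0" and D: "D \<in> carrier_mat l l" "det D \<noteq> 0"
  shows "minv (four_block_mat P (0\<^sub>m k l) (0\<^sub>m l k) D) = four_block_mat (minv P) (0\<^sub>m k l) (0\<^sub>m l k) (minv D)"
proof (rule minv_eq)
  note Pi = minv_inverse[OF P] and Di = minv_inverse[OF D]
  have "four_block_mat P (0\<^sub>m k l) (0\<^sub>m l k) D * four_block_mat (minv P) (0\<^sub>m k l) (0\<^sub>m l k) (minv D) =
      four_block_mat (P * minv P + 0\<^sub>m k l * 0\<^sub>m l k) (P * 0\<^sub>m k l + 0\<^sub>m k l * minv D)
        (0\<^sub>m l k * minv P + D * 0\<^sub>m l k) (0\<^sub>m l k * 0\<^sub>m k l + D * minv D)"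
    by (rule mult_four_block_mat) (use P D Pi Di in auto)
  also have "\<dots> = 1\<^sub>m (k + l)" using P D Pi Di by simp
  finally show "four_block_mat P (0\<^sub>m k l) (0\<^sub>m l k) D * four_block_mat (minv P) (0\<^sub>m k l) (0\<^sub>m l k) (minv D)
    = 1\<^sub>m (k + l)" .
qed (use P D minv_inverse[OF P] minv_inverse[OF D] in auto)

lemma unit_upper_four_block_mat:
  fixes E :: "complex mat"
  assumes E: "E \<in> carrier_mat k l"
  defines "G \<equiv> four_block_mat (1\<^sub>m k) (- E) (0\<^sub>m l k) (1\<^sub>m l)"
  shows "G \<in> carrier_mat (k + l) (k + l)" and "det G \<noteq> 0"
    and "\<And>u v. u \<in> carrier_vec k \<Longrightarrow> v \<in> carrier_vec l \<Longrightarrow> G *\<^sub>v (u @\<^sub>v v) = (u - E *\<^sub>v v) @\<^sub>v v"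
proof -
  show G: "G \<in> carrier_mat (k + l) (k + l)" unfolding G_def by auto
  have "G * four_block_mat (1\<^sub>m k) E (0\<^sub>m l k) (1\<^sub>m l) = four_block_mat (1\<^sub>m k * 1\<^sub>m k + (- E) * 0\<^sub>m l k)
      (1\<^sub>m k * E + (- E) * 1\<^sub>m l) (0\<^sub>m l k * 1\<^sub>m k + 1\<^sub>m l * 0\<^sub>m l k) (0\<^sub>m l k * E + 1\<^sub>m l * 1\<^sub>m l)"
    unfolding G_def by (rule mult_four_block_mat) (use E in auto)
  also have "\<dots> = 1\<^sub>m (k + l)"
    using E by (simp add: add_uminus_mat)
  finally show "det G \<noteq> 0"
    by (intro det_nonzero_of_right_inverse[OF G, of "four_block_mat (1\<^sub>m k) E (0\<^sub>m l k) (1\<^sub>m l)"]) auto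
  fix u v :: "complex vec" assume u: "u \<in> carrier_vec k" and v: "v \<in> carrier_vec l"
  have "G *\<^sub>v (u @\<^sub>v v) = (1\<^sub>m k *\<^sub>v u + (- E) *\<^sub>v v) @\<^sub>v (0\<^sub>m l k *\<^sub>v u + 1\<^sub>m l *\<^sub>v v)"
    unfolding G_def by (rule four_block_mat_mult_vec) (use E u v in auto)
  also have "1\<^sub>m k *\<^sub>v u + (- E) *\<^sub>v v = u - E *\<^sub>v v"
    using u v E by (intro eq_vecI) auto
  finally show "G *\<^sub>v (u @\<^sub>v v) = (u - E *\<^sub>v v) @\<^sub>v v"
    using u v by simp
qed

lemma schur_block_diagonalization:
  fixes A B C D :: "complex mat"
  assumes A: "A \<in> carrier_mat k k" and B: "B \<in> carrier_mat k l" and C: "C \<in> carrier_mat l k"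
    and D: "D \<in> carrier_mat l l" and T: "hpd (k + l) (four_block_mat A B C D)"
  defines "E \<equiv> B * minv D"
  defines "G \<equiv> four_block_mat (1\<^sub>m k) (- E) (0\<^sub>m l k) (1\<^sub>m l)"
  shows "G * four_block_mat A B C D * ctrans G = four_block_mat (A - E * C) (0\<^sub>m k l) (0\<^sub>m l k) D"
proof -
  have hD: "hpd l D"
    using hpd_principal_blocks(2)[OF T, of k] subm_four_block_mat(2)[OF A B C D] by simp
  have CB: "C = ctrans B"
    using hermitian_four_block_mat_lower_left[OF A B C D hpdD(2)[OF T]] .
  define Di where "Di = minv D"
  have Di: "Di \<in> carrier_mat l l" "D * Di = 1\<^sub>m l" "Di * D = 1\<^sub>m l" "ctrans Di = Di"
    using hpd_minv[OF hD] hpd_minv_hermitian[OF hD] unfolding Di_def by auto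
  have Ec: "E \<in> carrier_mat k l" unfolding E_def using B Di(1) Di_def by auto
  have "G * four_block_mat A B C D = four_block_mat (1\<^sub>m k * A + (- E) * C) (1\<^sub>m k * B + (- E) * D)
      (0\<^sub>m l k * A + 1\<^sub>m l * C) (0\<^sub>m l k * B + 1\<^sub>m l * D)"
    unfolding G_def by (rule mult_four_block_mat) (use A B C D Ec in auto)
  also have "\<dots> = four_block_mat (A - E * C) (0\<^sub>m k l) C D"
  proof (rule cong_four_block_mat)
    show "1\<^sub>m k * A + - E * C = A - E * C"
      using A Ec C by (simp add: add_uminus_minus_mat[of A k k "E * C"])
    have "E * D = B" unfolding E_def using B Di D Di_def by simp
    then show "1\<^sub>m k * B + - E * D = 0\<^sub>m k l"
      using B Ec D by (simp add: add_uminus_mat)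
  qed (use A B C D in auto)
  finally have GT: "G * four_block_mat A B C D = four_block_mat (A - E * C) (0\<^sub>m k l) C D" .
  have "ctrans E = Di * C" unfolding E_def CB Di_def[symmetric] using ctrans_mult[of B Di] B Di by simp
  then have cG: "ctrans G = four_block_mat (1\<^sub>m k) (0\<^sub>m k l) (- (Di * C)) (1\<^sub>m l)"
    unfolding G_def using ctrans_four_block_mat[of "1\<^sub>m k" k k "- E" l "0\<^sub>m l k" l "1\<^sub>m l"] Ec
    by (simp add: ctrans_uminus)
  have "G * four_block_mat A B C D * ctrans G = four_block_mat ((A - E * C) * 1\<^sub>m k + 0\<^sub>m k l * - (Di * C))
      ((A - E * C) * 0\<^sub>m k l + 0\<^sub>m k l * 1\<^sub>m l) (C * 1\<^sub>m k + D * - (Di * C)) (C * 0\<^sub>m k l + D * 1\<^sub>m l)"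
    unfolding GT cG by (rule mult_four_block_mat) (use A Ec C D Di in auto)
  also have "\<dots> = four_block_mat (A - E * C) (0\<^sub>m k l) (0\<^sub>m l k) D"
  proof (rule cong_four_block_mat)
    have "D * (Di * C) = C" by (rule mult_right_inverse_cancel[OF D Di(1,2) C])
    then show "C * 1\<^sub>m k + D * - (Di * C) = 0\<^sub>m l k"
      using C D Di by (simp add: add_uminus_mat)
  qed (use A Ec C D Di in auto)
  finally show ?thesis .
qed

lemma schur_complement_hpd:
  fixes A B C D :: "complex mat"
  assumes A: "A \<in> carrier_mat k k" and B: "B \<in> carrier_mat k l" and C: "C \<in> carrier_mat l k"
    and D: "D \<in> carrier_mat l l" and T: "hpd (k + l) (four_block_mat A B C D)"
  shows "hpd k (A - B * minv D * C)"
proof -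
  have "hpd l D"
    using hpd_principal_blocks(2)[OF T, of k] subm_four_block_mat(2)[OF A B C D] by simp
  then have P: "A - B * minv D * C \<in> carrier_mat k k" and E: "B * minv D \<in> carrier_mat k l"
    using A B C hpd_minv(1) by (metis minus_carrier_mat mult_carrier_mat)+
  note G = unit_upper_four_block_mat[OF E]
  have "hpd (k + l) (four_block_mat (A - B * minv D * C) (0\<^sub>m k l) (0\<^sub>m l k) D)"
    using hpd_congruence[OF T G(1,2)] unfolding schur_block_diagonalization[OF A B C D T] .
  from hpd_principal_blocks(1)[OF this, of k] show ?thesis
    using subm_four_block_mat(1)[OF P _ _ D] by simp
qed

lemma qform_minv_four_block_mat:
  fixes A B C D :: "complex mat"
  assumes A: "A \<in> carrier_mat k k" and B: "B \<in> carrier_mat k l" and C: "C \<in> carrier_mat l k"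
    and D: "D \<in> carrier_mat l l" and T: "hpd (k + l) (four_block_mat A B C D)"
    and u: "u \<in> carrier_vec k" and v: "v \<in> carrier_vec l"
  shows "qform (u @\<^sub>v v) (minv (four_block_mat A B C D)) (u @\<^sub>v v) =
    qform (u - B *\<^sub>v (minv D *\<^sub>v v)) (minv (A - B * minv D * C)) (u - B *\<^sub>v (minv D *\<^sub>v v))
    + qform v (minv D) v"
proof -
  let ?P = "A - B * minv D * C" and ?x = "u - B *\<^sub>v (minv D *\<^sub>v v)"
  have hD: "hpd l D"
    using hpd_principal_blocks(2)[OF T, of k] subm_four_block_mat(2)[OF A B C D] by simp
  have hP: "hpd k ?P" by (rule schur_complement_hpd[OF A B C D T])
  have Dc: "minv D \<in> carrier_mat l l" using hpd_minv(1)[OF hD] .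
  note G = unit_upper_four_block_mat[OF mult_carrier_mat[OF B Dc]]
  have x: "?x \<in> carrier_vec k" using B Dc u v by auto
  have "(B * minv D) *\<^sub>v v = B *\<^sub>v (minv D *\<^sub>v v)" using B Dc v by simp
  then have "qform (u @\<^sub>v v) (minv (four_block_mat A B C D)) (u @\<^sub>v v) =
      qform (?x @\<^sub>v v) (minv (four_block_mat ?P (0\<^sub>m k l) (0\<^sub>m l k) D)) (?x @\<^sub>v v)"
    using qform_minv_congruence[OF G(1,2) T, of "u @\<^sub>v v"] schur_block_diagonalization[OF A B C D T]
      G(3)[OF u v] u v by simp
  also have "\<dots> = qform ?x (minv ?P) ?x + qform v (minv D) v"
    unfolding minv_four_block_diag[OF hpdD(1) hpd_det_nonzero hpdD(1) hpd_det_nonzero, OF hP hP hD hD]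
    using qform_append_four_block_mat[OF hpd_minv(1)[OF hP] zero_carrier_mat zero_carrier_mat Dc x v x v]
      x v by simp
  finally show ?thesis .
qed

section \<open>The statistic in terms of tail forms\<close>

definition tail_form :: "nat \<Rightarrow> nat \<Rightarrow> complex vec \<Rightarrow> complex mat \<Rightarrow> complex" where
  "tail_form N k z S = qform (subv z k N) (minv (subm S k N k N)) (subv z k N)"

lemma tail_form_schur:
  assumes z: "z \<in> carrier_vec N" and S: "hpd N S" and km: "k \<le> m" and mN: "m \<le> N"
  defines "S\<^sub>1\<^sub>1 \<equiv> subm S k m k m" and "S\<^sub>1\<^sub>2 \<equiv> subm S k m m N"
    and "S\<^sub>2\<^sub>1 \<equiv> subm S m N k m" and "S\<^sub>2\<^sub>2 \<equiv> subm S m N m N"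
  defines "z\<^sub>1 \<equiv> subv z k m - S\<^sub>1\<^sub>2 *\<^sub>v (minv S\<^sub>2\<^sub>2 *\<^sub>v subv z m N)"
  shows "tail_form N k z S = qform z\<^sub>1 (minv (S\<^sub>1\<^sub>1 - S\<^sub>1\<^sub>2 * minv S\<^sub>2\<^sub>2 * S\<^sub>2\<^sub>1)) z\<^sub>1 + tail_form N m z S"
proof -
  define T where "T = subm S k N k N"
  have l: "m - k \<le> N - k" and Nk: "N - k = (m - k) + (N - m)" using km mN by auto
  have blocks: "subm T 0 (m - k) 0 (m - k) = S\<^sub>1\<^sub>1" "subm T 0 (m - k) (m - k) (N - k) = S\<^sub>1\<^sub>2"
    "subm T (m - k) (N - k) 0 (m - k) = S\<^sub>2\<^sub>1" "subm T (m - k) (N - k) (m - k) (N - k) = S\<^sub>2\<^sub>2"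
    unfolding T_def S\<^sub>1\<^sub>1_def S\<^sub>1\<^sub>2_def S\<^sub>2\<^sub>1_def S\<^sub>2\<^sub>2_def using km mN by (subst subm_subm; simp)+
  have T: "T = four_block_mat S\<^sub>1\<^sub>1 S\<^sub>1\<^sub>2 S\<^sub>2\<^sub>1 S\<^sub>2\<^sub>2"
    using four_block_mat_subm[OF _ l, of T] unfolding blocks by (simp add: T_def)
  have "subv z k N = subv (subv z k N) 0 (m - k) @\<^sub>v subv (subv z k N) (m - k) (N - k)"
    by (rule append_subv[OF _ l]) simp
  also have "\<dots> = subv z k m @\<^sub>v subv z m N"
    using km mN by (simp add: subv_subv)
  finally have w: "subv z k N = subv z k m @\<^sub>v subv z m N" .
  have "hpd ((m - k) + (N - m)) (four_block_mat S\<^sub>1\<^sub>1 S\<^sub>1\<^sub>2 S\<^sub>2\<^sub>1 S\<^sub>2\<^sub>2)"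
    using hpd_principal_blocks(2)[OF S, of k] km mN unfolding T_def[symmetric] T Nk by simp
  from qform_minv_four_block_mat[OF _ _ _ _ this]
  show ?thesis
    unfolding tail_form_def T_def[symmetric] T w z\<^sub>1_def S\<^sub>1\<^sub>1_def S\<^sub>1\<^sub>2_def S\<^sub>2\<^sub>1_def S\<^sub>2\<^sub>2_def by simp
qed

lemma t1_tail_forms:
  assumes z: "z \<in> carrier_vec N" and S: "hpd N S" and tr: "t + r \<le> N"
  shows "t1 N t r (z, S) = (if t + r < N
    then [tail_form N t z S - tail_form N (t + r) z S, tail_form N (t + r) z S]
    else [tail_form N t z S])"
proof (cases "t + r < N")
  case True
  then show ?thesis
    using tail_form_schur[OF z S _ tr, of t] unfolding t1_def Let_def by (simp add: tail_form_def)
qed (use tr in \<open>simp add: t1_def tail_form_def Let_def\<close>)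

lemma tail_form_act:
  assumes G: "G \<in> carrier_mat N N" "det G \<noteq> 0" and k: "t \<le> k" "k \<le> N"
    and llz: "lower_left_zero k G" and f: "f \<in> Fset N t"
    and z: "z \<in> carrier_vec N" and S: "hpd N S"
  shows "tail_form N k (G *\<^sub>v z + f) (G * S * ctrans G) = tail_form N k z S"
proof -
  have "subv (G *\<^sub>v z + f) k N = subv (G *\<^sub>v z) k N + subv f k N"
    using f G z unfolding Fset_def by (intro eq_vecI) auto
  also have "\<dots> = subm G k N k N *\<^sub>v subv z k N"
    using subv_Fset[OF f k(1)] subv_mult_vec_lower_left_zero[OF G(1) k(2) llz z]
      right_zero_vec[OF mult_mat_vec_carrier[OF subm_carrier_mat subv_carrier_vec]] by simp
  finally have v: "subv (G *\<^sub>v z + f) k N = subm G k N k N *\<^sub>v subv z k N" .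
  have "det (subm G k N k N) \<noteq> 0"
    using det_lower_left_zero[OF G(1) k(2) llz] G(2) by auto
  from qform_minv_congruence[OF _ this hpd_principal_blocks(2)[OF S k(2)]] show ?thesis
    unfolding tail_form_def v subm_congruence_lower_left_zero[OF G(1) k(2) llz hpdD(1)[OF S]] by simp
qed

lemma t1_act:
  assumes tr: "t + r \<le> N" and g: "(G, f) \<in> Lset N t r" and x: "(z, S) \<in> Dset N"
  shows "t1 N t r (act (G, f) (z, S)) = t1 N t r (z, S)"
proof -
  have G: "G \<in> carrier_mat N N" "det G \<noteq> 0" "lower_left_zero t G" "lower_left_zero (t + r) G"
    and f: "f \<in> Fset N t" and z: "z \<in> carrier_vec N" and S: "hpd N S"
    using g x Gset_iff[OF tr] unfolding Lset_def Dset_def by auto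
  have "act (G, f) (z, S) \<in> Dset N" by (rule act_Dset[OF g tr x])
  then have z': "G *\<^sub>v z + f \<in> carrier_vec N" and S': "hpd N (G * S * ctrans G)"
    unfolding act_def Dset_def by auto
  show ?thesis
    unfolding act_def prod.case t1_tail_forms[OF z' S' tr] t1_tail_forms[OF z S tr]
    using tail_form_act[OF G(1,2) _ _ G(3) f z S] tail_form_act[OF G(1,2) _ _ G(4) f z S] tr by simp
qed

section \<open>Cholesky factorization\<close>

lemma hpd_1x1:
  assumes D: "hpd 1 D"
  obtains s :: real where "s > 0" "D = mat 1 1 (\<lambda>_. complex_of_real (s * s))"
proof -
  let ?d = "D $$ (0, 0)" and ?e = "vec 1 (\<lambda>_. 1) :: complex vec"
  have Dc: "D \<in> carrier_mat 1 1" using hpdD(1)[OF D] .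
  have "cnj ?d = ?d" using arg_cong[OF hpdD(2)[OF D], of "\<lambda>M. M $$ (0, 0)"] Dc by simp
  then have im: "Im ?d = 0" by (metis cnj.simps(2) neg_equal_zero)
  have "?e \<noteq> 0\<^sub>v 1" by (metis index_vec index_zero_vec(1) less_one zero_neq_one)
  then have "Re (qform ?e D ?e) > 0" using hpdD(3)[OF D] by auto
  moreover have "qform ?e D ?e = ?d" unfolding qform_def using Dc by (auto simp: scalar_prod_def)
  ultimately have pos: "Re ?d > 0" by simp
  define s where "s = sqrt (Re ?d)"
  have "s > 0" "s * s = Re ?d" unfolding s_def using pos by auto
  moreover from this(2) have "D = mat 1 1 (\<lambda>_. complex_of_real (s * s))"
    using Dc im by (intro eq_matI) (auto simp: complex_eq_iff)
  ultimately show thesis using that by blast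
qed

lemma cholesky_four_block:
  fixes s :: real
  assumes A: "A \<in> carrier_mat k k" and B: "B \<in> carrier_mat k 1" and s: "s > 0"
    and D: "D = mat 1 1 (\<lambda>_. complex_of_real (s * s))"
    and L\<^sub>1: "L\<^sub>1 \<in> carrier_mat k k" "L\<^sub>1 * ctrans L\<^sub>1 = A - B * minv D * ctrans B"
  defines "L \<equiv> four_block_mat L\<^sub>1 (complex_of_real (1 / s) \<cdot>\<^sub>m B) (0\<^sub>m 1 k) (mat 1 1 (\<lambda>_. complex_of_real s))"
  shows "L * ctrans L = four_block_mat A B (ctrans B) D"
proof -
  let ?l = "complex_of_real (1 / s) \<cdot>\<^sub>m B" and ?\<Lambda> = "mat 1 1 (\<lambda>_. complex_of_real s)"
  have Dinv: "minv D = mat 1 1 (\<lambda>_. complex_of_real (1 / (s * s)))"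
    unfolding D using s by (intro minv_eq) (auto intro!: eq_matI simp: scalar_prod_def)
  have lc: "?l \<in> carrier_mat k 1" and \<Lambda>c: "?\<Lambda> \<in> carrier_mat 1 1" using B by auto
  have "L * ctrans L = four_block_mat (L\<^sub>1 * ctrans L\<^sub>1 + ?l * ctrans ?l) (L\<^sub>1 * 0\<^sub>m k 1 + ?l * ctrans ?\<Lambda>)
      (0\<^sub>m 1 k * ctrans L\<^sub>1 + ?\<Lambda> * ctrans ?l) (0\<^sub>m 1 k * 0\<^sub>m k 1 + ?\<Lambda> * ctrans ?\<Lambda>)"
    unfolding L_def ctrans_four_block_mat[OF L\<^sub>1(1) lc zero_carrier_mat \<Lambda>c] ctrans_zero
    by (rule mult_four_block_mat) (use L\<^sub>1 lc in auto)
  also have "\<dots> = four_block_mat A B (ctrans B) D"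
  proof (rule cong_four_block_mat)
    have "?l * ctrans ?l = B * minv D * ctrans B"
      unfolding Dinv using B s by (intro eq_matI) (auto simp: scalar_prod_def)
    then show "L\<^sub>1 * ctrans L\<^sub>1 + ?l * ctrans ?l = A"
      unfolding L\<^sub>1(2) using A B Dinv by (intro eq_matI) auto
    show "L\<^sub>1 * 0\<^sub>m k 1 + ?l * ctrans ?\<Lambda> = B"
      using L\<^sub>1 B s by (intro eq_matI) (auto simp: scalar_prod_def)
    show "0\<^sub>m 1 k * ctrans L\<^sub>1 + ?\<Lambda> * ctrans ?l = ctrans B"
      using L\<^sub>1 B s by (intro eq_matI) (auto simp: scalar_prod_def)
    show "0\<^sub>m 1 k * 0\<^sub>m k 1 + ?\<Lambda> * ctrans ?\<Lambda> = D"
      unfolding D by (intro eq_matI) (auto simp: scalar_prod_def)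
  qed
  finally show ?thesis .
qed

theorem cholesky:
  "hpd n S \<Longrightarrow> \<exists>L. L \<in> carrier_mat n n \<and> upper_triangular L \<and> det L \<noteq> 0 \<and> L * ctrans L = S"
proof (induction n arbitrary: S)
  case 0
  then have "1\<^sub>m 0 * ctrans (1\<^sub>m 0) = S" using hpdD(1)[OF "0.prems"] by (intro eq_matI) auto
  then show ?case by (intro exI[of _ "1\<^sub>m 0"]) auto
next
  case (Suc k)
  note S = hpdD(1,2)[OF Suc.prems]
  define A B C D where "A = subm S 0 k 0 k" and "B = subm S 0 k k (k + 1)"
    and "C = subm S k (k + 1) 0 k" and "D = subm S k (k + 1) k (k + 1)"
  have Ac: "A \<in> carrier_mat k k" and Bc: "B \<in> carrier_mat k 1" and Cc: "C \<in> carrier_mat 1 k"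
    and Dc: "D \<in> carrier_mat 1 1" unfolding A_def B_def C_def D_def by auto
  have split: "S = four_block_mat A B C D"
    unfolding A_def B_def C_def D_def using four_block_mat_subm[OF S(1)[unfolded Suc_eq_plus1]] by simp
  have T: "hpd (k + 1) (four_block_mat A B C D)" using Suc.prems split by simp
  have CB: "C = ctrans B"
    using hermitian_four_block_mat_lower_left[OF Ac Bc Cc Dc hpdD(2)[OF T]] .
  obtain L\<^sub>1 where L\<^sub>1: "L\<^sub>1 \<in> carrier_mat k k" "upper_triangular L\<^sub>1" "det L\<^sub>1 \<noteq> 0"
    "L\<^sub>1 * ctrans L\<^sub>1 = A - B * minv D * C"
    using Suc.IH[OF schur_complement_hpd[OF Ac Bc Cc Dc T]] by blast
  have "hpd 1 D" using hpd_principal_blocks(2)[OF T, of k] subm_four_block_mat(2)[OF Ac Bc Cc Dc] by simp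
  then obtain s :: real where s: "s > 0" and D: "D = mat 1 1 (\<lambda>_. complex_of_real (s * s))"
    by (rule hpd_1x1)
  define L where "L = four_block_mat L\<^sub>1 (complex_of_real (1 / s) \<cdot>\<^sub>m B) (0\<^sub>m 1 k)
    (mat 1 1 (\<lambda>_. complex_of_real s))"
  have "L \<in> carrier_mat (Suc k) (Suc k)" unfolding L_def using L\<^sub>1(1) by auto
  moreover have "upper_triangular L"
    unfolding L_def by (rule upper_triangular_four_block) (use L\<^sub>1 in auto)
  moreover have "det L \<noteq> 0"
    unfolding L_def using L\<^sub>1 Bc s by (subst det_four_block_mat_lower_left_zero) (auto simp: det_single)
  moreover have "L * ctrans L = S"
    unfolding L_def split CB using cholesky_four_block[OF Ac Bc s D L\<^sub>1(1)] L\<^sub>1(4) CB by simp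
  ultimately show ?case by blast
qed

section \<open>Unitary matrices\<close>

definition unitary :: "nat \<Rightarrow> complex mat \<Rightarrow> bool" where
  "unitary n U \<longleftrightarrow> U \<in> carrier_mat n n \<and> U * ctrans U = 1\<^sub>m n"

lemma unitary_det_nonzero: "unitary n U \<Longrightarrow> det U \<noteq> 0"
  unfolding unitary_def by (metis ctrans_carrier_mat det_nonzero_of_right_inverse)

lemma unitary_one: "unitary n (1\<^sub>m n)"
  unfolding unitary_def by simp

lemma unitary_mult:
  assumes U: "unitary n U" and V: "unitary n V"
  shows "unitary n (U * V)"
proof -
  have Uc: "U \<in> carrier_mat n n" and Vc: "V \<in> carrier_mat n n" using U V unfolding unitary_def by auto
  have "U * V * ctrans (U * V) = U * (V * ctrans V) * ctrans U"
    using Uc Vc by (simp add: ctrans_mult assoc_mult_mat[of _ n n _ n _ n] mult_carrier_mat[of _ n n _ n])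
  then show ?thesis using U V Uc Vc unfolding unitary_def by simp
qed

lemma unitary_smult_one:
  assumes "cnj \<theta> * \<theta> = 1" shows "unitary n (\<theta> \<cdot>\<^sub>m 1\<^sub>m n)"
proof -
  have ct: "ctrans (\<theta> \<cdot>\<^sub>m 1\<^sub>m n) = cnj \<theta> \<cdot>\<^sub>m 1\<^sub>m n" by (rule eq_matI) auto
  have "(\<theta> \<cdot>\<^sub>m 1\<^sub>m n) * ctrans (\<theta> \<cdot>\<^sub>m 1\<^sub>m n) = \<theta> \<cdot>\<^sub>m (1\<^sub>m n * (cnj \<theta> \<cdot>\<^sub>m 1\<^sub>m n))"
    unfolding ct by (rule mult_smult_assoc_mat) auto
  also have "\<dots> = 1\<^sub>m n"
    using assms by (intro eq_matI) (auto simp: mult.commute)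
  finally show ?thesis unfolding unitary_def by simp
qed

lemma unitary_four_block_diag:
  assumes U: "unitary k U" and V: "unitary l V"
  shows "unitary (k + l) (four_block_mat U (0\<^sub>m k l) (0\<^sub>m l k) V)"
proof -
  have Uc: "U \<in> carrier_mat k k" and Vc: "V \<in> carrier_mat l l" using U V unfolding unitary_def by auto
  have "four_block_mat U (0\<^sub>m k l) (0\<^sub>m l k) V * ctrans (four_block_mat U (0\<^sub>m k l) (0\<^sub>m l k) V) =
      four_block_mat (U * ctrans U + 0\<^sub>m k l * 0\<^sub>m l k) (U * 0\<^sub>m k l + 0\<^sub>m k l * ctrans V)
        (0\<^sub>m l k * ctrans U + V * 0\<^sub>m l k) (0\<^sub>m l k * 0\<^sub>m k l + V * ctrans V)"
    unfolding ctrans_four_block_mat[OF Uc zero_carrier_mat zero_carrier_mat Vc] ctrans_zero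
    by (rule mult_four_block_mat) (use Uc Vc in auto)
  also have "\<dots> = 1\<^sub>m (k + l)" using U V Uc Vc unfolding unitary_def by simp
  finally show ?thesis unfolding unitary_def using Uc Vc by auto
qed

lemma cscalar_prod_sum:
  "v \<in> carrier_vec n \<Longrightarrow> w \<in> carrier_vec n \<Longrightarrow> v \<bullet>c w = (\<Sum>i<n. cnj (w $ i) * v $ i)"
  unfolding scalar_prod_def by (auto simp: lessThan_atLeast0 mult.commute intro!: sum.cong)

lemma cscalar_prod_self_real:
  assumes "v \<in> carrier_vec n" shows "cnj (v \<bullet>c v) = v \<bullet>c v"
  using conjugate_square_ge_0_vec[of v] by (simp add: less_eq_complex_def complex_eq_iff)

lemma sum_delta_mult: "i < (n::nat) \<Longrightarrow> (\<Sum>j<n. (if i = j then 1 else 0) * f j) = (f i :: complex)"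
proof -
  have "(if i = j then 1 else 0) * f j = (if i = j then f j else 0)" for j by auto
  then show "i < n \<Longrightarrow> ?thesis" by simp
qed

lemma smult_mat_mult_vec:
  "A \<in> carrier_mat n m \<Longrightarrow> v \<in> carrier_vec m \<Longrightarrow> (k \<cdot>\<^sub>m A) *\<^sub>v v = k \<cdot>\<^sub>v (A *\<^sub>v v)"
  by (intro eq_vecI) (auto simp: scalar_prod_def sum_distrib_left mult.assoc)

definition householder :: "complex vec \<Rightarrow> complex mat" where
  "householder v = mat (dim_vec v) (dim_vec v)
     (\<lambda>(i, j). (if i = j then 1 else 0) - 2 / (v \<bullet>c v) * v $ i * cnj (v $ j))"

lemma householder_mult_vec:
  assumes v: "v \<in> carrier_vec n" and w: "w \<in> carrier_vec n"
  shows "householder v *\<^sub>v w = w - (2 / (v \<bullet>c v) * (w \<bullet>c v)) \<cdot>\<^sub>v v"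
proof (rule eq_vecI)
  fix i assume "i < dim_vec (w - (2 / (v \<bullet>c v) * (w \<bullet>c v)) \<cdot>\<^sub>v v)"
  then have i: "i < n" using w v by auto
  define c where "c = 2 / (v \<bullet>c v)"
  have "(householder v *\<^sub>v w) $ i = (\<Sum>j<n. ((if i = j then 1 else 0) - c * v $ i * cnj (v $ j)) * w $ j)"
    unfolding householder_def c_def using i v w by (auto simp: scalar_prod_def lessThan_atLeast0 intro!: sum.cong)
  also have "\<dots> = (\<Sum>j<n. (if i = j then 1 else 0) * w $ j) - c * v $ i * (\<Sum>j<n. cnj (v $ j) * w $ j)"
    by (simp add: sum_subtractf[symmetric] sum_distrib_left algebra_simps)
  also have "\<dots> = (w - (c * (w \<bullet>c v)) \<cdot>\<^sub>v v) $ i"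
    using i w v by (simp add: sum_delta_mult cscalar_prod_sum)
  finally show "(householder v *\<^sub>v w) $ i = (w - (2 / (v \<bullet>c v) * (w \<bullet>c v)) \<cdot>\<^sub>v v) $ i"
    unfolding c_def .
qed (use v w in \<open>auto simp: householder_def\<close>)

lemma householder_unitary:
  assumes v: "v \<in> carrier_vec n" "v \<noteq> 0\<^sub>v n"
  shows "unitary n (householder v)"
proof -
  define c where "c = 2 / (v \<bullet>c v)"
  have "v \<bullet>c v \<noteq> 0" using conjugate_square_eq_0_vec[OF v(1)] v(2) by simp
  then have cv: "c * (v \<bullet>c v) = 2" unfolding c_def by simp
  have cc: "cnj c = c" unfolding c_def using cscalar_prod_self_real[OF v(1)] by simp
  have nv: "v \<bullet>c v = (\<Sum>k<n. cnj (v $ k) * v $ k)" using cscalar_prod_sum[OF v(1) v(1)] .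
  have H: "householder v = mat n n (\<lambda>(i, j). (if i = j then 1 else 0) - c * v $ i * cnj (v $ j))"
    unfolding householder_def c_def using v by simp
  have "householder v * ctrans (householder v) = 1\<^sub>m n"
  proof (rule eq_matI)
    fix i j assume "i < dim_row (1\<^sub>m n)" "j < dim_col (1\<^sub>m n)"
    then have i: "i < n" and j: "j < n" by auto
    have "(householder v * ctrans (householder v)) $$ (i, j) = (\<Sum>k<n. ((if i = k then 1 else 0) - c * v $ i * cnj (v $ k)) *
         ((if j = k then 1 else 0) - c * cnj (v $ j) * v $ k))"
      unfolding H using i j cc by (auto simp: scalar_prod_def lessThan_atLeast0 intro!: sum.cong)
    also have "\<dots> = (\<Sum>k<n. (if i = k then 1 else 0) * ((if j = k then 1 else 0) - c * cnj (v $ j) * v $ k))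
       - (\<Sum>k<n. (if j = k then 1 else 0) * (c * v $ i * cnj (v $ k)))
       + c * c * v $ i * cnj (v $ j) * (\<Sum>k<n. cnj (v $ k) * v $ k)"
      by (simp add: sum_subtractf[symmetric] sum.distrib[symmetric] sum_distrib_left algebra_simps)
    also have "\<dots> = ((if j = i then 1 else 0) - c * cnj (v $ j) * v $ i) - c * v $ i * cnj (v $ j)
       + c * c * v $ i * cnj (v $ j) * (v \<bullet>c v)"
      using i j nv by (simp add: sum_delta_mult)
    also have "\<dots> = (if j = i then 1 else 0) + v $ i * cnj (v $ j) * c * (c * (v \<bullet>c v) - 2)"
      by (simp add: algebra_simps)
    also have "\<dots> = 1\<^sub>m n $$ (i, j)" using cv i j by auto
    finally show "(householder v * ctrans (householder v)) $$ (i, j) = 1\<^sub>m n $$ (i, j)" .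
  qed (auto simp: H)
  then show ?thesis unfolding unitary_def H by auto
qed

lemma minus_vec_eq_0_iff:
  fixes a b :: "complex vec"
  assumes "a \<in> carrier_vec n" "b \<in> carrier_vec n" shows "a - b = 0\<^sub>v n \<longleftrightarrow> a = b"
proof
  assume ab: "a - b = 0\<^sub>v n"
  show "a = b"
  proof (rule eq_vecI)
    fix i assume "i < dim_vec b"
    then show "a $ i = b $ i" using arg_cong[OF ab, of "\<lambda>w. w $ i"] assms by auto
  qed (use assms in auto)
qed (use assms in auto)

lemma householder_reflection:
  assumes p: "p \<in> carrier_vec n" and q: "q \<in> carrier_vec n" and "q \<noteq> p"
    and norm: "q \<bullet>c q = p \<bullet>c p" and real: "p \<bullet>c q = q \<bullet>c p"
  shows "householder (q - p) *\<^sub>v q = p"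
proof -
  define v where "v = q - p"
  have v: "v \<in> carrier_vec n" unfolding v_def using q p by auto
  have sq: "a \<bullet>c a = (\<Sum>i<n. cnj (a $ i) * a $ i)" if "a \<in> carrier_vec n" for a
    using cscalar_prod_sum[OF that that] .
  have "q \<bullet>c v = (\<Sum>i<n. cnj (q $ i) * q $ i) - (\<Sum>i<n. cnj (p $ i) * q $ i)"
    unfolding cscalar_prod_sum[OF q v] unfolding v_def using q p
    by (simp add: sum_subtractf[symmetric] algebra_simps)
  then have qv: "q \<bullet>c v = q \<bullet>c q - q \<bullet>c p"
    unfolding sq[OF q] cscalar_prod_sum[OF q p] .
  have "v \<bullet>c v = (\<Sum>i<n. cnj (q $ i) * q $ i) - (\<Sum>i<n. cnj (q $ i) * p $ i)
      - (\<Sum>i<n. cnj (p $ i) * q $ i) + (\<Sum>i<n. cnj (p $ i) * p $ i)"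
    unfolding sq[OF v] unfolding v_def using q p
    by (simp add: sum_subtractf[symmetric] sum.distrib[symmetric] algebra_simps)
  then have "v \<bullet>c v = 2 * (q \<bullet>c v)"
    unfolding qv sq[OF q, symmetric] sq[OF p, symmetric] cscalar_prod_sum[OF q p, symmetric]
      cscalar_prod_sum[OF p q, symmetric] norm real by simp
  moreover have "v \<noteq> 0\<^sub>v n" unfolding v_def using \<open>q \<noteq> p\<close> minus_vec_eq_0_iff[OF q p] by simp
  then have "v \<bullet>c v \<noteq> 0" using conjugate_square_eq_0_vec[OF v] by simp
  ultimately have "2 / (v \<bullet>c v) * (q \<bullet>c v) = 1" by simp
  then show ?thesis
    unfolding v_def[symmetric] householder_mult_vec[OF v q] using q p unfolding v_def by (intro eq_vecI) auto
qed

lemma phase_rotation: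
  assumes p: "p \<in> carrier_vec n" and q: "q \<in> carrier_vec n"
  obtains \<theta> where "cnj \<theta> * \<theta> = 1" and "p \<bullet>c (\<theta> \<cdot>\<^sub>v q) = (\<theta> \<cdot>\<^sub>v q) \<bullet>c p"
proof -
  define x where "x = p \<bullet>c q"
  define \<theta> where "\<theta> = (if x = 0 then 1 else x / complex_of_real (cmod x))"
  have "cnj x * x = complex_of_real ((cmod x)\<^sup>2)"
    using complex_norm_square[of x] by (simp add: mult.commute)
  then have \<theta>: "cnj \<theta> * \<theta> = 1" and \<theta>x: "cnj \<theta> * x = complex_of_real (cmod x)"
    unfolding \<theta>_def by (auto simp: field_simps power2_eq_square)
  have "p \<bullet>c (\<theta> \<cdot>\<^sub>v q) = cnj \<theta> * x"
    unfolding x_def using p q by (simp add: cscalar_prod_sum sum_distrib_left mult.assoc)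
  moreover have "(\<theta> \<cdot>\<^sub>v q) \<bullet>c p = cnj (cnj \<theta> * x)"
    unfolding x_def using p q by (simp add: cscalar_prod_sum sum_distrib_left mult.commute mult.left_commute)
  ultimately show thesis using that[OF \<theta>] \<theta>x by simp
qed

lemma unitary_map:
  assumes p: "p \<in> carrier_vec n" and q: "q \<in> carrier_vec n" and eq: "p \<bullet>c p = q \<bullet>c q"
  shows "\<exists>U. unitary n U \<and> U *\<^sub>v q = p"
proof -
  obtain \<theta> where \<theta>: "cnj \<theta> * \<theta> = 1" and real: "p \<bullet>c (\<theta> \<cdot>\<^sub>v q) = (\<theta> \<cdot>\<^sub>v q) \<bullet>c p"
    using phase_rotation[OF p q] by blast
  define q' where "q' = \<theta> \<cdot>\<^sub>v q"
  have q': "q' \<in> carrier_vec n" unfolding q'_def using q by auto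
  have phase: "(\<theta> \<cdot>\<^sub>m 1\<^sub>m n) *\<^sub>v q = q'"
    unfolding q'_def using smult_mat_mult_vec[OF one_carrier_mat q] q by simp
  have "q' \<bullet>c q' = cnj \<theta> * \<theta> * (q \<bullet>c q)"
    unfolding q'_def using q by (simp add: conjugate_smult_vec mult.commute)
  then have q'q': "q' \<bullet>c q' = p \<bullet>c p" using \<theta> eq by simp
  show ?thesis
  proof (cases "q' = p")
    case True
    then show ?thesis using phase unitary_smult_one[OF \<theta>] by blast
  next
    case False
    then have "householder (q' - p) *\<^sub>v q' = p"
      using householder_reflection[OF p q' False q'q' real[folded q'_def]] by simp
    then have "(householder (q' - p) * (\<theta> \<cdot>\<^sub>m 1\<^sub>m n)) *\<^sub>v q = p"
      using phase q q' p by (simp add: householder_def assoc_mult_mat_vec[of _ n n _ n])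
    moreover have "q' - p \<noteq> 0\<^sub>v n" using False minus_vec_eq_0_iff[OF q' p] by simp
    then have "unitary n (householder (q' - p) * (\<theta> \<cdot>\<^sub>m 1\<^sub>m n))"
      using unitary_mult[OF householder_unitary unitary_smult_one[OF \<theta>]] q' p by simp
    ultimately show ?thesis by blast
  qed
qed

section \<open>Maximality\<close>

lemma append_subv3:
  "z \<in> carrier_vec N \<Longrightarrow> a \<le> b \<Longrightarrow> b \<le> N \<Longrightarrow> z = subv z 0 a @\<^sub>v (subv z a b @\<^sub>v subv z b N)"
  by (intro eq_vecI) auto

lemma t1_one_mat:
  assumes tr: "t + r \<le> N"
  shows "t1 N t r (w, 1\<^sub>m N) = (if t + r < N
    then [subv w t (t + r) \<bullet>c subv w t (t + r), subv w (t + r) N \<bullet>c subv w (t + r) N]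
    else [subv w t (t + r) \<bullet>c subv w t (t + r)])"
proof -
  let ?m = "t + r"
  have "subm (1\<^sub>m N) t ?m t ?m = 1\<^sub>m r" "subm (1\<^sub>m N) ?m N ?m N = 1\<^sub>m (N - ?m)"
    "subm (1\<^sub>m N) t ?m ?m N = 0\<^sub>m r (N - ?m)" "subm (1\<^sub>m N) ?m N t ?m = 0\<^sub>m (N - ?m) r"
    using tr by (auto intro!: eq_matI)
  moreover have "subv w t ?m - 0\<^sub>m r (N - ?m) *\<^sub>v (1\<^sub>m (N - ?m) *\<^sub>v subv w ?m N) = subv w t ?m"
    by (intro eq_vecI) (auto simp: scalar_prod_def)
  moreover have "1\<^sub>m r - 0\<^sub>m r (N - ?m) * 1\<^sub>m (N - ?m) * 0\<^sub>m (N - ?m) r = (1\<^sub>m r :: complex mat)"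
    by (intro eq_matI) (auto simp: scalar_prod_def)
  moreover have "qform (subv w t ?m) (1\<^sub>m r) (subv w t ?m) = subv w t ?m \<bullet>c subv w t ?m"
    "qform (subv w ?m N) (1\<^sub>m (N - ?m)) (subv w ?m N) = subv w ?m N \<bullet>c subv w ?m N"
    using qform_one[of "subv w t ?m" r] qform_one[of "subv w ?m N" "N - ?m"] by simp_all
  ultimately show ?thesis
    unfolding t1_def Let_def prod.case by simp
qed

lemma four_block_diag_mult_vec:
  assumes "A \<in> carrier_mat k k" "D \<in> carrier_mat l l" "a \<in> carrier_vec k" "d \<in> carrier_vec l"
  shows "four_block_mat A (0\<^sub>m k l) (0\<^sub>m l k) D *\<^sub>v (a @\<^sub>v d) = (A *\<^sub>v a) @\<^sub>v (D *\<^sub>v d)"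
  using four_block_mat_mult_vec[OF assms(1) zero_carrier_mat zero_carrier_mat assms(2-4)] assms by simp

lemma unitary_block_diag_Gset:
  assumes tr: "t + r \<le> N" and V\<^sub>2: "unitary r V\<^sub>2" and V\<^sub>3: "unitary (N - (t + r)) V\<^sub>3"
  defines "V \<equiv> four_block_mat V\<^sub>2 (0\<^sub>m r (N - (t + r))) (0\<^sub>m (N - (t + r)) r) V\<^sub>3"
  defines "U \<equiv> four_block_mat (1\<^sub>m t) (0\<^sub>m t (r + (N - (t + r)))) (0\<^sub>m (r + (N - (t + r))) t) V"
  shows "unitary N U" and "U \<in> Gset N t r"
proof -
  let ?l = "N - (t + r)"
  have V\<^sub>2c: "V\<^sub>2 \<in> carrier_mat r r" and V\<^sub>3c: "V\<^sub>3 \<in> carrier_mat ?l ?l"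
    using V\<^sub>2 V\<^sub>3 unfolding unitary_def by auto
  have N: "t + (r + ?l) = N" using tr by simp
  have Vc: "V \<in> carrier_mat (r + ?l) (r + ?l)" unfolding V_def using V\<^sub>2c V\<^sub>3c by auto
  show U: "unitary N U"
    using unitary_four_block_diag[OF unitary_one unitary_four_block_diag[OF V\<^sub>2 V\<^sub>3], of t]
    unfolding U_def V_def N .
  have "lower_left_zero (r + 0) V"
    unfolding V_def by (rule lower_left_zero_four_block_diag[OF V\<^sub>2c V\<^sub>3c lower_left_zero_0])
  then have "lower_left_zero (t + r) U"
    unfolding U_def by (intro lower_left_zero_four_block_diag[OF one_carrier_mat Vc]) simp
  moreover have "lower_left_zero (t + 0) U"
    unfolding U_def by (rule lower_left_zero_four_block_diag[OF one_carrier_mat Vc lower_left_zero_0])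
  ultimately show "U \<in> Gset N t r"
    unfolding Gset_iff[OF tr] using U unitary_det_nonzero[OF U] unfolding unitary_def by simp
qed

lemma block_unitary_orbit:
  assumes tr: "t + r \<le> N" and w: "w \<in> carrier_vec N" and w': "w' \<in> carrier_vec N"
    and V\<^sub>2: "unitary r V\<^sub>2" "V\<^sub>2 *\<^sub>v subv w' t (t + r) = subv w t (t + r)"
    and V\<^sub>3: "unitary (N - (t + r)) V\<^sub>3" "V\<^sub>3 *\<^sub>v subv w' (t + r) N = subv w (t + r) N"
  shows "\<exists>g \<in> Lset N t r. (w, 1\<^sub>m N) = act g (w', 1\<^sub>m N)"
proof -
  let ?m = "t + r" and ?l = "N - (t + r)"
  have V\<^sub>2c: "V\<^sub>2 \<in> carrier_mat r r" and V\<^sub>3c: "V\<^sub>3 \<in> carrier_mat ?l ?l"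
    using V\<^sub>2 V\<^sub>3 unfolding unitary_def by auto
  define V where "V = four_block_mat V\<^sub>2 (0\<^sub>m r ?l) (0\<^sub>m ?l r) V\<^sub>3"
  define U where "U = four_block_mat (1\<^sub>m t) (0\<^sub>m t (r + ?l)) (0\<^sub>m (r + ?l) t) V"
  define f where "f = (subv w 0 t - subv w' 0 t) @\<^sub>v 0\<^sub>v (N - t)"
  have Nt: "r + ?l = N - t" using tr by simp
  have Vc: "V \<in> carrier_mat (r + ?l) (r + ?l)" unfolding V_def using V\<^sub>2c V\<^sub>3c by auto
  note U = unitary_block_diag_Gset[OF tr V\<^sub>2(1) V\<^sub>3(1), folded V_def, folded U_def]
  then have Uc: "U \<in> carrier_mat N N" unfolding unitary_def by simp
  have "f \<in> carrier_vec N"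
    unfolding f_def using append_carrier_vec[of "subv w 0 t - subv w' 0 t" t "0\<^sub>v (N - t)" "N - t"] tr by simp
  then have "f \<in> Fset N t" unfolding Fset_def f_def by auto
  then have g: "(U, f) \<in> Lset N t r" unfolding Lset_def using U(2) by simp
  have w'23: "subv w' t ?m @\<^sub>v subv w' ?m N \<in> carrier_vec (r + ?l)"
    using append_carrier_vec[of "subv w' t ?m" r "subv w' ?m N" ?l] by simp
  have "U *\<^sub>v w' = U *\<^sub>v (subv w' 0 t @\<^sub>v (subv w' t ?m @\<^sub>v subv w' ?m N))"
    by (subst append_subv3[OF w', of t ?m]) (use tr in auto)
  also have "\<dots> = subv w' 0 t @\<^sub>v (V *\<^sub>v (subv w' t ?m @\<^sub>v subv w' ?m N))"
    unfolding U_def using four_block_diag_mult_vec[OF one_carrier_mat Vc _ w'23, of "subv w' 0 t"] by simp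
  also have "V *\<^sub>v (subv w' t ?m @\<^sub>v subv w' ?m N) = subv w t ?m @\<^sub>v subv w ?m N"
    unfolding V_def using four_block_diag_mult_vec[OF V\<^sub>2c V\<^sub>3c, of "subv w' t ?m" "subv w' ?m N"] V\<^sub>2(2) V\<^sub>3(2)
    by simp
  finally have "U *\<^sub>v w' + f = (subv w' 0 t @\<^sub>v (subv w t ?m @\<^sub>v subv w ?m N)) + f"
    by simp
  also have "\<dots> = subv w 0 t @\<^sub>v (subv w t ?m @\<^sub>v subv w ?m N)"
    unfolding f_def using append_carrier_vec[of "subv w t ?m" r "subv w ?m N" ?l] Nt
    by (subst append_vec_add[of _ t _ _ "N - t"]) (auto intro!: eq_vecI)
  also have "\<dots> = w" using append_subv3[OF w, of t ?m] tr by simp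
  finally have "U *\<^sub>v w' + f = w" .
  moreover have "U * 1\<^sub>m N * ctrans U = 1\<^sub>m N" using U(1) Uc unfolding unitary_def by simp
  ultimately have "(w, 1\<^sub>m N) = act (U, f) (w', 1\<^sub>m N)" unfolding act_def by simp
  with g show ?thesis by blast
qed

lemma identity_orbit:
  assumes tr: "t + r \<le> N" and w: "w \<in> carrier_vec N" and w': "w' \<in> carrier_vec N"
    and eq: "t1 N t r (w, 1\<^sub>m N) = t1 N t r (w', 1\<^sub>m N)"
  shows "\<exists>g \<in> Lset N t r. (w, 1\<^sub>m N) = act g (w', 1\<^sub>m N)"
proof -
  let ?m = "t + r"
  have norm\<^sub>2: "subv w t ?m \<bullet>c subv w t ?m = subv w' t ?m \<bullet>c subv w' t ?m"
    using eq by (cases "?m < N") (simp_all add: t1_one_mat[OF tr])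
  have norm\<^sub>3: "subv w ?m N \<bullet>c subv w ?m N = subv w' ?m N \<bullet>c subv w' ?m N"
  proof (cases "?m < N")
    case False
    then show ?thesis using tr by (simp add: scalar_prod_def)
  qed (use eq in \<open>simp add: t1_one_mat[OF tr]\<close>)
  have "\<exists>V. unitary r V \<and> V *\<^sub>v subv w' t ?m = subv w t ?m"
    by (rule unitary_map) (use norm\<^sub>2 in simp_all)
  moreover have "\<exists>V. unitary (N - ?m) V \<and> V *\<^sub>v subv w' ?m N = subv w ?m N"
    by (rule unitary_map) (use norm\<^sub>3 in simp_all)
  ultimately show ?thesis
    using block_unitary_orbit[OF tr w w'] by blast
qed

lemma cholesky_orbit:
  assumes tr: "t + r \<le> N" and x: "(z, S) \<in> Dset N"
  obtains L R w where "(L, 0\<^sub>v N) \<in> Lset N t r" "(R, 0\<^sub>v N) \<in> Lset N t r" "w \<in> carrier_vec N"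
    "(z, S) = act (L, 0\<^sub>v N) (w, 1\<^sub>m N)" "(w, 1\<^sub>m N) = act (R, 0\<^sub>v N) (z, S)"
proof -
  have z: "z \<in> carrier_vec N" and S: "hpd N S" using x unfolding Dset_def by auto
  obtain L where L: "L \<in> carrier_mat N N" "upper_triangular L" "det L \<noteq> 0" "L * ctrans L = S"
    using cholesky[OF S] by blast
  obtain R where R: "R \<in> carrier_mat N N" "L * R = 1\<^sub>m N" "R * L = 1\<^sub>m N"
    by (rule obtain_inverse_mat[OF L(1,3)])
  have "lower_left_zero k L" "lower_left_zero k R" for k
    using upper_triangular_lower_left_zero[OF L(2)] lower_left_zero_inverse[OF L(1) R(1,3)] by auto
  moreover have "det R \<noteq> 0" by (rule det_nonzero_of_right_inverse[OF R(1) L(1) R(3)])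
  moreover have "0\<^sub>v N \<in> Fset N t" unfolding Fset_def by auto
  ultimately have LR: "(L, 0\<^sub>v N) \<in> Lset N t r" "(R, 0\<^sub>v N) \<in> Lset N t r"
    unfolding Lset_def using L R Gset_iff[OF tr] by auto
  have x_eq: "(z, S) = act (L, 0\<^sub>v N) (R *\<^sub>v z, 1\<^sub>m N)"
    unfolding act_def using L R z by (simp add: assoc_mult_mat_vec[symmetric, of _ N N _ N])
  have "R * S * ctrans R = 1\<^sub>m N"
  proof -
    have "R * S * ctrans R = (R * L) * (ctrans L * ctrans R)"
      unfolding L(4)[symmetric] using L(1) R(1)
      by (simp add: assoc_mult_mat[of _ N N _ N _ N] mult_carrier_mat[of _ N N _ N])
    then show ?thesis using R(3) ctrans_inverse[OF R(1) L(1) R(3)] by simp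
  qed
  then have "(R *\<^sub>v z, 1\<^sub>m N) = act (R, 0\<^sub>v N) (z, S)"
    unfolding act_def using R z by simp
  with that[OF LR _ x_eq] show thesis using R z by simp
qed

lemma t1_separates_orbits:
  assumes tr: "t + r \<le> N" and x: "(z, S) \<in> Dset N" and y: "(z', S') \<in> Dset N"
    and eq: "t1 N t r (z, S) = t1 N t r (z', S')"
  shows "\<exists>g\<in>Lset N t r. (z, S) = act g (z', S')"
proof -
  obtain L R w where L: "(L, 0\<^sub>v N) \<in> Lset N t r" and R: "(R, 0\<^sub>v N) \<in> Lset N t r" and w: "w \<in> carrier_vec N"
    and x_eq: "(z, S) = act (L, 0\<^sub>v N) (w, 1\<^sub>m N)" and w_eq: "(w, 1\<^sub>m N) = act (R, 0\<^sub>v N) (z, S)"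
    by (rule cholesky_orbit[OF tr x])
  obtain L' R' w' where R': "(R', 0\<^sub>v N) \<in> Lset N t r" and w': "w' \<in> carrier_vec N"
    and w'_eq: "(w', 1\<^sub>m N) = act (R', 0\<^sub>v N) (z', S')"
    by (rule cholesky_orbit[OF tr y])
  have "t1 N t r (w, 1\<^sub>m N) = t1 N t r (w', 1\<^sub>m N)"
    unfolding w_eq w'_eq t1_act[OF tr R x] t1_act[OF tr R' y] by (rule eq)
  then obtain g where g: "g \<in> Lset N t r" and "(w, 1\<^sub>m N) = act g (act (R', 0\<^sub>v N) (z', S'))"
    using identity_orbit[OF tr w w'] unfolding w'_eq by blast
  then have x_act: "(z, S) = act (L, 0\<^sub>v N) (act g (act (R', 0\<^sub>v N) (z', S')))"
    using x_eq by simp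
  obtain g' where "g' \<in> Lset N t r" and "act g (act (R', 0\<^sub>v N) (z', S')) = act g' (z', S')"
    using act_act_Lset[OF tr g R' y] by blast
  with act_act_Lset[OF tr L _ y] show ?thesis
    unfolding x_act by auto
qed

theorem proposition1:
  fixes N t r K :: nat
  assumes "N \<ge> 2" and "t \<ge> 1" and "r \<ge> 1" and "t + r \<le> N" and "K \<ge> N"
  shows "maximal_invariant (t1 N t r) (Dset N) (Lset N t r) act"
  unfolding maximal_invariant_def
proof (intro conjI ballI impI)
  note tr = \<open>t + r \<le> N\<close>
  show "t1 N t r (act g x) = t1 N t r x" if "x \<in> Dset N" "g \<in> Lset N t r" for x g
    using that t1_act[OF tr] by (cases x, cases g) simp
  show "\<exists>g\<in>Lset N t r. x = act g y" if "x \<in> Dset N" "y \<in> Dset N" "t1 N t r x = t1 N t r y" for x y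
    using that t1_separates_orbits[OF tr] by (cases x, cases y) simp
qed

end
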